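(* Let $\mathbf{B}$ (resp. $\mathbf{B}^{nc}$) be the gap-insertion incidence bialgebra of set partitions (resp. of noncrossing partitions), and $\mathbf{H}$ (resp. $\mathbf{H}^{nc}$) its connected quotient, as defined in the context. The linear map $\operatorname{nc}^*$ defined on noncrossing partitions by $$\operatorname{nc}^*(P)=\sum_{P'\,:\,\operatorname{nc}(P')=P}P'$$ (the sum over all set partitions $P'$ of the same degree as $P$ whose noncrossing closure is $P$; in particular $\operatorname{nc}^*(\emptyset)=\emptyset$), extended multiplicatively, is a bialgebra homomorphism $\mathbf{B}^{nc}\to\mathbf{B}$, and it induces a bialgebra homomorphism $\mathbf{H}^{nc}\to\mathbf{H}$.
   Context: A partition of degree $n$ is a set partition of $[n]$ into nonempty blocks (degree $0$: only the empty partition $\emptyset$); partitions of finite linearly ordered sets are identified with partitions of $[n]$ via the order-preserving bijection; for $X\subset[n]$, $P_{|X}$ is the induced partition of $X$ (nonempty intersections of blocks with $X$). A partition is noncrossing if there are no $a<c<b<d$ with $a,b$ in one block and $c,d$ in another. The noncrossing closure $\operatorname{nc}(P)$ is the finest noncrossing partition coarser than $P$. For finite $X\subset\mathbb{N}$, $\operatorname{Conv}(X)=\{\min X,\dots,\max X\}$. On the set of blocks of a partition $P$ let $\pi\to\rho$ iff $\operatorname{Conv}(\pi)\cap\rho\neq\emptyset$, and take the transitive closure. An upperset is a set $U$ of blocks with ($\pi\in U$, $\pi\to\rho$) $\Rightarrow\rho\in U$; a lowerset is a set $L$ with ($\pi\in L$, $\sigma\to\pi$) $\Rightarrow\sigma\in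 L$. A cut $(L,U)$ of $P$ is a splitting of the blocks into a lowerset $L$ and its complement $U$ (an upperset). We identify $L$ with the partition $P$ restricted to the union of its blocks. If $x_1<\dots<x_k$ are the elements of this union, put $D_0=\{y<x_1\}$, $D_i=\{x_i<y<x_{i+1}\}$ ($0<i<k$), $D_k=\{y>x_k\}$ (if $k=0$, $D_0=[n]$), and $U_i=P_{|D_i}$ (possibly empty). $\mathbf{B}$ is the free associative unital algebra generated by all set partitions including $\emptyset$ (a generator distinct from the unit $\mathbf{1}$), with coproduct $\Delta_0(P)=\sum_{(L,U)\text{ cut of }P}L\otimes U_0U_1\cdots U_k$ extended multiplicatively, and counit $\varepsilon(\emptyset)=1$, $\varepsilon(P)=0$ for $P$ nonempty. $\mathbf{H}$ is the quotient of $\mathbf{B}$ by the ideal generated by $\emptyset-\mathbf{1}$ (free associative algebra on nonempty partitions), with coproduct $\Delta(P)=\sum_{(L,U)}L\otimes\overline U$, where $\overline U$ is the product, in order, of the nonempty $U_i$. $\mathbf{B}^{nc}$ and $\mathbf{H}^{nc}$ are the sub-bialgebras spanned by monomials of noncrossing partitions. *)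

theory Defs
  imports "HOL-Library.Disjoint_Sets" "HOL-Library.Poly_Mapping"
begin

text \<open>A set partition is represented by its set of blocks. A partition of degree n
is a partition of {1..n}; the empty partition (degree 0) is the empty set of blocks.\<close>

type_synonym setpart = "nat set set"

definition is_part_of :: "nat \<Rightarrow> setpart \<Rightarrow> bool" where
  "is_part_of n P \<longleftrightarrow> partition_on {1..n} P"

definition is_part :: "setpart \<Rightarrow> bool" where
  "is_part P \<longleftrightarrow> (\<exists>n. is_part_of n P)"

definition degree :: "setpart \<Rightarrow> nat" where
  "degree P = card (\<Union>P)"

definition induced :: "setpart \<Rightarrow> nat set \<Rightarrow> setpart" where
  "induced P X = {b \<inter> X | b. b \<in> P \<and> b \<inter> X \<noteq> {}}"

text \<open>Standardisation: a partition of a finite set of naturals is identified with a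
partition of {1..k} via the order preserving bijection.\<close>
definition rank_in :: "nat set \<Rightarrow> nat \<Rightarrow> nat" where
  "rank_in X x = card {y \<in> X. y \<le> x}"

definition std :: "setpart \<Rightarrow> setpart" where
  "std P = (\<lambda>b. rank_in (\<Union>P) ` b) ` P"

definition noncrossing :: "setpart \<Rightarrow> bool" where
  "noncrossing P \<longleftrightarrow> \<not> (\<exists>B1\<in>P. \<exists>B2\<in>P. B1 \<noteq> B2 \<and>
      (\<exists>a b c d. a < c \<and> c < b \<and> b < d \<and> a \<in> B1 \<and> b \<in> B1 \<and> c \<in> B2 \<and> d \<in> B2))"

definition finer :: "setpart \<Rightarrow> setpart \<Rightarrow> bool" where
  "finer P Q \<longleftrightarrow> (\<forall>b\<in>P. \<exists>c\<in>Q. b \<subseteq> c)"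

definition nc_closure :: "setpart \<Rightarrow> setpart" where
  "nc_closure P = (THE Q. partition_on (\<Union>P) Q \<and> noncrossing Q \<and> finer P Q \<and>
      (\<forall>Q'. partition_on (\<Union>P) Q' \<and> noncrossing Q' \<and> finer P Q' \<longrightarrow> finer Q Q'))"

definition conv :: "nat set \<Rightarrow> nat set" where
  "conv X = {Min X..Max X}"

definition arrow :: "setpart \<Rightarrow> (nat set \<times> nat set) set" where
  "arrow P = {(\<pi>, \<rho>). \<pi> \<in> P \<and> \<rho> \<in> P \<and> conv \<pi> \<inter> \<rho> \<noteq> {}}"

definition upperset :: "setpart \<Rightarrow> nat set set \<Rightarrow> bool" where
  "upperset P U \<longleftrightarrow> U \<subseteq> P \<and> (\<forall>\<pi>\<in>U. \<forall>\<rho>. (\<pi>, \<rho>) \<in> (arrow P)\<^sup>+ \<longrightarrow> \<rho> \<in> U)"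

definition lowerset :: "setpart \<Rightarrow> nat set set \<Rightarrow> bool" where
  "lowerset P L \<longleftrightarrow> L \<subseteq> P \<and> (\<forall>\<pi>\<in>L. \<forall>\<sigma>. (\<sigma>, \<pi>) \<in> (arrow P)\<^sup>+ \<longrightarrow> \<sigma> \<in> L)"

text \<open>A cut (L, U) is represented by its lower part L; U = P - L.\<close>
definition cuts :: "setpart \<Rightarrow> nat set set set" where
  "cuts P = {L. lowerset P L \<and> upperset P (P - L)}"

definition gaps :: "nat \<Rightarrow> nat set \<Rightarrow> nat set list" where
  "gaps n X = (let xs = sorted_list_of_set X; k = length xs in
     map (\<lambda>i. {y \<in> {1..n}. (i = 0 \<or> xs ! (i - 1) < y) \<and> (i = k \<or> y < xs ! i)}) [0..<k+1])"

definition upper_parts :: "setpart \<Rightarrow> nat set set \<Rightarrow> setpart list" where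
  "upper_parts P L = map (\<lambda>D. std (induced P D)) (gaps (degree P) (\<Union>L))"

text \<open>An element of the free associative algebra generated by partitions is a finitely
supported coefficient function on words (lists) of generators. The unit is the empty word;
the generator \<emptyset> is the one-letter word [{}]. Elements of the tensor square are finitely
supported functions on pairs of words.\<close>

type_synonym 'k alg = "setpart list \<Rightarrow>\<^sub>0 'k"
type_synonym 'k alg2 = "(setpart list \<times> setpart list) \<Rightarrow>\<^sub>0 'k"

definition scale :: "'k::comm_ring_1 \<Rightarrow> ('a \<Rightarrow>\<^sub>0 'k) \<Rightarrow> ('a \<Rightarrow>\<^sub>0 'k)" where
  "scale c x = Poly_Mapping.map (\<lambda>v. c * v) x"

definition lin :: "('a \<Rightarrow> ('b \<Rightarrow>\<^sub>0 'k::comm_ring_1)) \<Rightarrow> ('a \<Rightarrow>\<^sub>0 'k) \<Rightarrow> ('b \<Rightarrow>\<^sub>0 'k)" where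
  "lin F x = (\<Sum>w\<in>Poly_Mapping.keys x. scale (Poly_Mapping.lookup x w) (F w))"

definition mon :: "'a \<Rightarrow> ('a \<Rightarrow>\<^sub>0 'k::comm_ring_1)" where
  "mon w = Poly_Mapping.single w 1"

definition wmult :: "'k::comm_ring_1 alg \<Rightarrow> 'k alg \<Rightarrow> 'k alg" where
  "wmult x y = (\<Sum>u\<in>Poly_Mapping.keys x. \<Sum>v\<in>Poly_Mapping.keys y. Poly_Mapping.single (u @ v) (Poly_Mapping.lookup x u * Poly_Mapping.lookup y v))"

definition tmult :: "'k::comm_ring_1 alg2 \<Rightarrow> 'k alg2 \<Rightarrow> 'k alg2" where
  "tmult x y = (\<Sum>u\<in>Poly_Mapping.keys x. \<Sum>v\<in>Poly_Mapping.keys y.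
      Poly_Mapping.single (fst u @ fst v, snd u @ snd v) (Poly_Mapping.lookup x u * Poly_Mapping.lookup y v))"

definition tensor :: "'k::comm_ring_1 alg \<Rightarrow> 'k alg \<Rightarrow> 'k alg2" where
  "tensor a b = (\<Sum>u\<in>Poly_Mapping.keys a. \<Sum>v\<in>Poly_Mapping.keys b. Poly_Mapping.single (u, v) (Poly_Mapping.lookup a u * Poly_Mapping.lookup b v))"

definition wprod :: "'k::comm_ring_1 alg list \<Rightarrow> 'k alg" where
  "wprod xs = foldr wmult xs (mon [])"

definition tprod :: "'k::comm_ring_1 alg2 list \<Rightarrow> 'k alg2" where
  "tprod xs = foldr tmult xs (mon ([], []))"

definition tmap :: "('k::comm_ring_1 alg \<Rightarrow> 'k alg) \<Rightarrow> 'k alg2 \<Rightarrow> 'k alg2" where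
  "tmap f z = lin (\<lambda>(u, v). tensor (f (mon u)) (f (mon v))) z"

definition Bset :: "'k::comm_ring_1 alg set" where
  "Bset = {x. \<forall>w\<in>Poly_Mapping.keys x. \<forall>P\<in>set w. is_part P}"

definition Bnc :: "'k::comm_ring_1 alg set" where
  "Bnc = {x. \<forall>w\<in>Poly_Mapping.keys x. \<forall>P\<in>set w. is_part P \<and> noncrossing P}"

definition cop0_gen :: "setpart \<Rightarrow> 'k::comm_ring_1 alg2" where
  "cop0_gen P = (\<Sum>L\<in>cuts P. Poly_Mapping.single ([std L], upper_parts P L) 1)"

definition cop0 :: "'k::comm_ring_1 alg \<Rightarrow> 'k alg2" where
  "cop0 x = lin (\<lambda>w. tprod (map cop0_gen w)) x"

definition counit0 :: "'k::comm_ring_1 alg \<Rightarrow> 'k" where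
  "counit0 x = (\<Sum>w\<in>Poly_Mapping.keys x. Poly_Mapping.lookup x w * (if (\<forall>P\<in>set w. P = {}) then 1 else 0))"

text \<open>H is the free algebra on nonempty partitions (words without the letter {}); the
quotient map B \<rightarrow> H sends \<emptyset> to the unit, i.e. deletes the letters {}.\<close>

definition Hset :: "'k::comm_ring_1 alg set" where
  "Hset = {x. \<forall>w\<in>Poly_Mapping.keys x. \<forall>P\<in>set w. is_part P \<and> P \<noteq> {}}"

definition Hnc :: "'k::comm_ring_1 alg set" where
  "Hnc = {x. \<forall>w\<in>Poly_Mapping.keys x. \<forall>P\<in>set w. is_part P \<and> P \<noteq> {} \<and> noncrossing P}"

definition quot :: "'k::comm_ring_1 alg \<Rightarrow> 'k alg" where
  "quot x = lin (\<lambda>w. mon (filter (\<lambda>P. P \<noteq> {}) w)) x"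

definition cop_gen :: "setpart \<Rightarrow> 'k::comm_ring_1 alg2" where
  "cop_gen P = (\<Sum>L\<in>cuts P.
     Poly_Mapping.single (filter (\<lambda>Q. Q \<noteq> {}) [std L], filter (\<lambda>Q. Q \<noteq> {}) (upper_parts P L)) 1)"

definition cop :: "'k::comm_ring_1 alg \<Rightarrow> 'k alg2" where
  "cop x = lin (\<lambda>w. tprod (map cop_gen w)) x"

definition counit :: "'k::comm_ring_1 alg \<Rightarrow> 'k" where
  "counit x = (\<Sum>w\<in>Poly_Mapping.keys x. Poly_Mapping.lookup x w * (if w = [] then 1 else 0))"

definition ncstar_gen :: "setpart \<Rightarrow> 'k::comm_ring_1 alg" where
  "ncstar_gen P = (\<Sum>P'\<in>{P'. is_part_of (degree P) P' \<and> nc_closure P' = P}. mon [P'])"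

definition ncstar :: "'k::comm_ring_1 alg \<Rightarrow> 'k alg" where
  "ncstar x = lin (\<lambda>w. wprod (map ncstar_gen w)) x"

definition bialg_hom ::
  "'k::comm_ring_1 alg set \<Rightarrow> ('k alg \<Rightarrow> 'k alg \<Rightarrow> 'k alg) \<Rightarrow> 'k alg \<Rightarrow> ('k alg \<Rightarrow> 'k alg2) \<Rightarrow> ('k alg \<Rightarrow> 'k)
   \<Rightarrow> 'k alg set \<Rightarrow> ('k alg \<Rightarrow> 'k alg \<Rightarrow> 'k alg) \<Rightarrow> 'k alg \<Rightarrow> ('k alg \<Rightarrow> 'k alg2) \<Rightarrow> ('k alg \<Rightarrow> 'k)
   \<Rightarrow> ('k alg \<Rightarrow> 'k alg) \<Rightarrow> bool" where
  "bialg_hom A mA eA cA uA B mB eB cB uB f \<longleftrightarrow>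
     (\<forall>x\<in>A. f x \<in> B) \<and>
     (\<forall>x\<in>A. \<forall>y\<in>A. f (x + y) = f x + f y) \<and>
     (\<forall>x\<in>A. \<forall>c. f (scale c x) = scale c (f x)) \<and>
     f eA = eB \<and>
     (\<forall>x\<in>A. \<forall>y\<in>A. f (mA x y) = mB (f x) (f y)) \<and>
     (\<forall>x\<in>A. cB (f x) = tmap f (cA x)) \<and>
     (\<forall>x\<in>A. uB (f x) = uA x)"

end

theory Submission
  imports Defs
begin

(*
  Fix a noncrossing partition P of [n]. Comparing coefficients, the identity
  Delta_0 (ncstar P) = (ncstar x ncstar) (Delta_0 P) says that the pairs (P', L') with nc(P') = P
  and L' a cut of P' are in bijection with the tuples (L, C, C_0, ..., C_k) with L a cut of P,
  nc(C) = std L and nc(C_i) = U_i. The bijection sends (P', L') to the blocks of P inside the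
  support S of L', together with the standardised restrictions of P' to S and to the gaps of S.
  It works because S and its gaps decompose [n] into pieces no two of which cross: if every block
  of P' lies in a piece, then nc(P') is computed piece by piece, and closures computed on the
  pieces glue to a closure on [n]. Standardisation preserves the order, so it commutes with nc.
  Everything else (multiplicativity, counits, and the passage to H by deleting the letter {},
  whose fibre under nc is {{}}) is bookkeeping with linear maps on free modules.
*)

definition is_nc_closure :: "setpart \<Rightarrow> setpart \<Rightarrow> bool" where
  "is_nc_closure P Q \<longleftrightarrow> partition_on (\<Union>P) Q \<and> noncrossing Q \<and> finer P Q \<and>
     (\<forall>Q'. partition_on (\<Union>P) Q' \<and> noncrossing Q' \<and> finer P Q' \<longrightarrow> finer Q Q')"

lemma noncrossingD:
  assumes "noncrossing Q" "B1 \<in> Q" "B2 \<in> Q" "a < c" "c < b" "b < d"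
    "a \<in> B1" "b \<in> B1" "c \<in> B2" "d \<in> B2"
  shows "B1 = B2"
proof (rule ccontr)
  assume "B1 \<noteq> B2"
  with assms have "\<exists>B1\<in>Q. \<exists>B2\<in>Q. B1 \<noteq> B2 \<and>
      (\<exists>a b c d. a < c \<and> c < b \<and> b < d \<and> a \<in> B1 \<and> b \<in> B1 \<and> c \<in> B2 \<and> d \<in> B2)"
    by metis
  then show False using assms(1) unfolding noncrossing_def by simp
qed

lemma noncrossingI:
  assumes "\<And>B1 B2 a b c d. B1 \<in> Q \<Longrightarrow> B2 \<in> Q \<Longrightarrow> a < c \<Longrightarrow> c < b \<Longrightarrow> b < d \<Longrightarrow>
    a \<in> B1 \<Longrightarrow> b \<in> B1 \<Longrightarrow> c \<in> B2 \<Longrightarrow> d \<in> B2 \<Longrightarrow> B1 = B2"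
  shows "noncrossing Q"
  using assms unfolding noncrossing_def by blast

lemma noncrossing_subset: "noncrossing P \<Longrightarrow> Q \<subseteq> P \<Longrightarrow> noncrossing Q"
  by (rule noncrossingI) (meson noncrossingD subsetD)

lemma finerD: "finer P Q \<Longrightarrow> b \<in> P \<Longrightarrow> \<exists>c\<in>Q. b \<subseteq> c"
  unfolding finer_def by blast

lemma partition_on_block_unique:
  "partition_on A P \<Longrightarrow> p \<in> P \<Longrightarrow> q \<in> P \<Longrightarrow> x \<in> p \<Longrightarrow> x \<in> q \<Longrightarrow> p = q"
  by (auto simp: partition_on_def disjoint_def)

lemma partition_on_block_exists: "partition_on A P \<Longrightarrow> x \<in> A \<Longrightarrow> \<exists>p\<in>P. x \<in> p"
  by (auto simp: partition_on_def)

lemma partition_on_block_nonempty: "partition_on A P \<Longrightarrow> p \<in> P \<Longrightarrow> \<exists>x. x \<in> p"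
  by (metis ex_in_conv partition_onD3)

lemma partition_on_block_subset: "partition_on A P \<Longrightarrow> p \<in> P \<Longrightarrow> p \<subseteq> A"
  using partition_onD1 by fastforce

lemma is_nc_closureD:
  assumes "is_nc_closure P Q"
  shows "partition_on (\<Union>P) Q" "noncrossing Q" "finer P Q"
  using assms unfolding is_nc_closure_def by auto

lemma is_nc_closure_minimal:
  "is_nc_closure P Q \<Longrightarrow> partition_on (\<Union>P) Q' \<Longrightarrow> noncrossing Q' \<Longrightarrow> finer P Q' \<Longrightarrow> finer Q Q'"
  unfolding is_nc_closure_def by blast

lemma is_nc_closure_unique: "is_nc_closure P Q1 \<Longrightarrow> is_nc_closure P Q2 \<Longrightarrow> Q1 = Q2"
  unfolding is_nc_closure_def by (metis refines_asym refines_def finer_def)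

lemma noncrossing_common_refinement:
  assumes part: "\<And>Q. Q \<in> \<Q> \<Longrightarrow> partition_on A Q" and nc: "\<And>Q. Q \<in> \<Q> \<Longrightarrow> noncrossing Q"
    and "\<Q> \<noteq> {}"
  shows "noncrossing (common_refinement \<Q>)"
proof (rule noncrossingI)
  fix X Y a b c d
  assume X: "X \<in> common_refinement \<Q>" and Y: "Y \<in> common_refinement \<Q>"
    and order: "a < c" "c < b" "b < d" and mem: "a \<in> X" "b \<in> X" "c \<in> Y" "d \<in> Y"
  obtain f where f: "f \<in> (\<Pi> Q\<in>\<Q>. Q)" "X = \<Inter>(f ` \<Q>)"
    using X unfolding common_refinement by blast
  have "c \<in> f Q" if Q: "Q \<in> \<Q>" for Q
  proof -
    obtain R where R: "R \<in> Q" "Y \<subseteq> R" using common_refinement_exists[OF Y Q] by blast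
    have "f Q \<in> Q" "a \<in> f Q" "b \<in> f Q" using f Q mem by auto
    then have "f Q = R" using noncrossingD[OF nc[OF Q] _ R(1) order] R(2) mem by blast
    then show ?thesis using R(2) mem by blast
  qed
  then have "c \<in> X" using f(2) by blast
  then show "X = Y"
    using partition_on_block_unique[OF partition_on_common_refinement[OF part \<open>\<Q> \<noteq> {}\<close>] X Y]
      mem by blast
qed

text \<open>The noncrossing closure is the common refinement of all noncrossing coarsenings.\<close>

lemma is_nc_closure_exists:
  assumes P: "partition_on A P"
  shows "\<exists>Q. is_nc_closure P Q"
proof -
  define \<Q> where "\<Q> = {Q. partition_on A Q \<and> noncrossing Q \<and> finer P Q}"
  have part: "\<And>Q. Q \<in> \<Q> \<Longrightarrow> partition_on A Q" and nc: "\<And>Q. Q \<in> \<Q> \<Longrightarrow> noncrossing Q"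
    unfolding \<Q>_def by auto
  have "partition_on A ({A} - {{}})"
    by (cases "A = {}") (simp_all add: partition_on_empty partition_on_space)
  moreover have "noncrossing ({A} - {{}})" by (rule noncrossingI) blast
  moreover have "finer P ({A} - {{}})"
    unfolding finer_def using partition_on_block_subset[OF P] partition_onD3[OF P] by blast
  ultimately have "{A} - {{}} \<in> \<Q>" unfolding \<Q>_def by blast
  then have ne: "\<Q> \<noteq> {}" by blast
  have refines: "refines A P Q" if "Q \<in> \<Q>" for Q
    using that P unfolding \<Q>_def refines_def finer_def by blast
  have "is_nc_closure P (common_refinement \<Q>)"
    unfolding is_nc_closure_def partition_onD1[OF P, symmetric]
  proof (intro conjI allI impI)
    show "partition_on A (common_refinement \<Q>)" using partition_on_common_refinement[OF part ne] .
    show "noncrossing (common_refinement \<Q>)" using noncrossing_common_refinement[OF part nc ne] .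
    show "finer P (common_refinement \<Q>)"
      using common_refinement_coarsest[OF part P refines ne] unfolding refines_def finer_def by blast
    fix Q' assume "partition_on A Q' \<and> noncrossing Q' \<and> finer P Q'"
    then show "finer (common_refinement \<Q>) Q'"
      using refines_common_refinement[OF part] unfolding \<Q>_def refines_def finer_def by blast
  qed
  then show ?thesis by blast
qed

lemma nc_closure_eq_iff:
  assumes "partition_on A P"
  shows "nc_closure P = Q \<longleftrightarrow> is_nc_closure P Q"
proof -
  obtain Q0 where Q0: "is_nc_closure P Q0" using is_nc_closure_exists[OF assms] by blast
  have "nc_closure P = (THE Q. is_nc_closure P Q)"
    unfolding nc_closure_def is_nc_closure_def ..
  also have "\<dots> = Q0"
    by (rule the_equality[where P = "is_nc_closure P", OF Q0]) (rule is_nc_closure_unique[OF _ Q0])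
  finally have "nc_closure P = Q0" .
  then show ?thesis using is_nc_closure_unique[OF Q0] Q0 by blast
qed

definition nc_fibre :: "setpart \<Rightarrow> setpart set" where
  "nc_fibre P = {P'. is_part_of (degree P) P' \<and> nc_closure P' = P}"

lemma finite_nc_fibre: "finite (nc_fibre Q)"
proof (rule finite_subset)
  show "nc_fibre Q \<subseteq> {B. partition_on {1..degree Q} B}" unfolding nc_fibre_def is_part_of_def by blast
qed (simp add: finitely_many_partition_on)

lemma nc_closure_empty: "nc_closure {} = {}"
  using nc_closure_eq_iff[of "{}" "{}" "{}"]
  unfolding is_nc_closure_def noncrossing_def finer_def by (simp add: partition_on_empty)

lemma nc_fibre_empty: "nc_fibre {} = {{}}"
  unfolding nc_fibre_def is_part_of_def degree_def by (auto simp: partition_on_empty nc_closure_empty)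

lemma nc_fibre_nonempty:
  assumes "P \<noteq> {}" "P' \<in> nc_fibre P"
  shows "P' \<noteq> {}"
proof
  assume "P' = {}"
  then have "P = nc_closure {}" using assms(2) unfolding nc_fibre_def by simp
  then show False using assms(1) nc_closure_empty by simp
qed

lemma is_part_nc_fibre: "P' \<in> nc_fibre P \<Longrightarrow> is_part P'"
  unfolding nc_fibre_def is_part_def by blast

section \<open>Noncrossing decompositions\<close>

definition noncrossing_decomp :: "nat set \<Rightarrow> nat set list \<Rightarrow> bool" where
  "noncrossing_decomp A Xs \<longleftrightarrow>
     (\<forall>i<length Xs. Xs!i \<subseteq> A) \<and> (\<forall>x\<in>A. \<exists>i<length Xs. x \<in> Xs!i) \<and>
     (\<forall>i<length Xs. \<forall>j<length Xs. \<forall>x. x \<in> Xs!i \<longrightarrow> x \<in> Xs!j \<longrightarrow> i = j) \<and>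
     (\<forall>i<length Xs. \<forall>j<length Xs. \<forall>a b c d. a < c \<longrightarrow> c < b \<longrightarrow> b < d \<longrightarrow>
        a \<in> Xs!i \<longrightarrow> b \<in> Xs!i \<longrightarrow> c \<in> Xs!j \<longrightarrow> d \<in> Xs!j \<longrightarrow> i = j)"

definition fits_pieces :: "nat set list \<Rightarrow> setpart \<Rightarrow> bool" where
  "fits_pieces Xs P \<longleftrightarrow> (\<forall>\<beta>\<in>P. \<exists>i<length Xs. \<beta> \<subseteq> Xs!i)"

definition blocks_in :: "setpart \<Rightarrow> nat set \<Rightarrow> setpart" where
  "blocks_in P X = {\<beta>\<in>P. \<beta> \<subseteq> X}"

lemma fits_piecesD: "fits_pieces Xs P \<Longrightarrow> \<beta> \<in> P \<Longrightarrow> \<exists>i<length Xs. \<beta> \<subseteq> Xs!i"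
  unfolding fits_pieces_def by (rule bspec)

lemma Union_blocks_in:
  assumes "fits_pieces Xs P"
  shows "\<Union>(set (map (blocks_in P) Xs)) = P"
proof
  show "P \<subseteq> \<Union>(set (map (blocks_in P) Xs))"
  proof
    fix \<beta> assume "\<beta> \<in> P"
    then obtain i where "i < length Xs" "\<beta> \<in> blocks_in P (Xs!i)"
      using fits_piecesD[OF assms] unfolding blocks_in_def by blast
    then show "\<beta> \<in> \<Union>(set (map (blocks_in P) Xs))" by auto
  qed
qed (auto simp: blocks_in_def)

lemma noncrossing_blocks_in: "noncrossing P \<Longrightarrow> noncrossing (blocks_in P X)"
  unfolding blocks_in_def by (rule noncrossing_subset) auto

lemma partition_on_induced: "partition_on A P \<Longrightarrow> X \<subseteq> A \<Longrightarrow> partition_on X (induced P X)"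
proof -
  assume "partition_on A P" "X \<subseteq> A"
  moreover have "induced P X = (\<inter>) X ` P - {{}}" unfolding induced_def by blast
  ultimately show ?thesis using partition_on_restrict[of A P X] by (simp add: Int_absorb2)
qed

lemma noncrossing_induced: "noncrossing P \<Longrightarrow> noncrossing (induced P X)"
  unfolding induced_def by (rule noncrossingI) (blast dest: noncrossingD)

lemma finer_blocks_in_induced:
  assumes P': "partition_on A P'" and "finer P' Q"
  shows "finer (blocks_in P' X) (induced Q X)"
  unfolding finer_def
proof
  fix b assume "b \<in> blocks_in P' X"
  then have b: "b \<in> P'" "b \<subseteq> X" by (auto simp: blocks_in_def)
  obtain q where q: "q \<in> Q" "b \<subseteq> q" using finerD[OF \<open>finer P' Q\<close> b(1)] by blast
  have "b \<noteq> {}" using partition_onD3[OF P'] b(1) by blast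
  then have "q \<inter> X \<in> induced Q X" using q b unfolding induced_def by blast
  then show "\<exists>c\<in>induced Q X. b \<subseteq> c" using q b by blast
qed

lemma fits_pieces_finer:
  assumes "finer P R" "fits_pieces Xs R"
  shows "fits_pieces Xs P"
  unfolding fits_pieces_def
proof
  fix \<beta> assume "\<beta> \<in> P"
  then obtain c where "c \<in> R" "\<beta> \<subseteq> c" using finerD[OF assms(1)] by blast
  then show "\<exists>i<length Xs. \<beta> \<subseteq> Xs!i" using fits_piecesD[OF assms(2)] by blast
qed

context
  fixes A :: "nat set" and Xs :: "nat set list"
  assumes decomp: "noncrossing_decomp A Xs"
begin

lemma piece_subset: "i < length Xs \<Longrightarrow> Xs!i \<subseteq> A"
  using decomp[unfolded noncrossing_decomp_def, THEN conjunct1] by blast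

lemma piece_exists: "x \<in> A \<Longrightarrow> \<exists>i<length Xs. x \<in> Xs!i"
  using decomp[unfolded noncrossing_decomp_def, THEN conjunct2, THEN conjunct1] by blast

lemma piece_unique: "i < length Xs \<Longrightarrow> j < length Xs \<Longrightarrow> x \<in> Xs!i \<Longrightarrow> x \<in> Xs!j \<Longrightarrow> i = j"
  using decomp[unfolded noncrossing_decomp_def, THEN conjunct2, THEN conjunct2, THEN conjunct1]
  by blast

lemma pieces_noncrossing:
  "i < length Xs \<Longrightarrow> j < length Xs \<Longrightarrow> a < c \<Longrightarrow> c < b \<Longrightarrow> b < d \<Longrightarrow>
   a \<in> Xs!i \<Longrightarrow> b \<in> Xs!i \<Longrightarrow> c \<in> Xs!j \<Longrightarrow> d \<in> Xs!j \<Longrightarrow> i = j"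
  using decomp[unfolded noncrossing_decomp_def, THEN conjunct2, THEN conjunct2, THEN conjunct2]
  by blast

lemma partition_on_blocks_in:
  assumes P: "partition_on A P" and "fits_pieces Xs P" and i: "i < length Xs"
  shows "partition_on (Xs!i) (blocks_in P (Xs!i))"
proof (rule partition_onI)
  show "\<Union>(blocks_in P (Xs!i)) = Xs!i"
  proof
    show "Xs!i \<subseteq> \<Union>(blocks_in P (Xs!i))"
    proof
      fix x assume x: "x \<in> Xs!i"
      then obtain \<beta> where \<beta>: "\<beta> \<in> P" "x \<in> \<beta>"
        using partition_on_block_exists[OF P] piece_subset[OF i] by blast
      then obtain j where "j < length Xs" "\<beta> \<subseteq> Xs!j" using fits_piecesD[OF \<open>fits_pieces Xs P\<close>] by blast
      with x \<beta> i have "\<beta> \<subseteq> Xs!i" using piece_unique by blast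
      with \<beta> show "x \<in> \<Union>(blocks_in P (Xs!i))" unfolding blocks_in_def by blast
    qed
  qed (auto simp: blocks_in_def)
  show "disjnt p q" if "p \<in> blocks_in P (Xs!i)" "q \<in> blocks_in P (Xs!i)" "p \<noteq> q" for p q
    using that partition_on_block_unique[OF P] unfolding blocks_in_def disjnt_def by blast
  show "{} \<notin> blocks_in P (Xs!i)" using partition_onD3[OF P] unfolding blocks_in_def by blast
qed

lemma induced_eq_blocks_in:
  assumes P: "partition_on A P" and "fits_pieces Xs P" and i: "i < length Xs"
  shows "induced P (Xs!i) = blocks_in P (Xs!i)"
proof -
  have sub: "\<beta> \<subseteq> Xs!i" if "\<beta> \<in> P" "\<beta> \<inter> Xs!i \<noteq> {}" for \<beta>
    using that fits_piecesD[OF \<open>fits_pieces Xs P\<close>] piece_unique[OF _ i] by blast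
  show ?thesis
  proof (intro equalityI subsetI)
    fix c assume "c \<in> induced P (Xs!i)"
    then obtain \<beta> where "\<beta> \<in> P" "c = \<beta> \<inter> Xs!i" "\<beta> \<inter> Xs!i \<noteq> {}"
      unfolding induced_def by blast
    moreover from this have "\<beta> \<subseteq> Xs!i" using sub by blast
    ultimately show "c \<in> blocks_in P (Xs!i)" unfolding blocks_in_def by (simp add: Int_absorb2)
  next
    fix c assume "c \<in> blocks_in P (Xs!i)"
    then have "c \<in> P" "c \<subseteq> Xs!i" "c \<noteq> {}" using partition_onD3[OF P] unfolding blocks_in_def by auto
    then show "c \<in> induced P (Xs!i)" unfolding induced_def by (intro CollectI exI[of _ c]) auto
  qed
qed

lemma finer_blocks_in:
  assumes P': "partition_on A P'" and "fits_pieces Xs P" "finer P' P" and i: "i < length Xs"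
  shows "finer (blocks_in P' (Xs!i)) (blocks_in P (Xs!i))"
  unfolding finer_def
proof
  fix b assume "b \<in> blocks_in P' (Xs!i)"
  then have b: "b \<in> P'" "b \<subseteq> Xs!i" unfolding blocks_in_def by auto
  obtain \<beta> where \<beta>: "\<beta> \<in> P" "b \<subseteq> \<beta>" using finerD[OF \<open>finer P' P\<close> b(1)] by blast
  obtain j where j: "j < length Xs" "\<beta> \<subseteq> Xs!j" using fits_piecesD[OF \<open>fits_pieces Xs P\<close> \<beta>(1)] by blast
  obtain x where "x \<in> b" using partition_on_block_nonempty[OF P' b(1)] by blast
  then have "j = i" using piece_unique[OF j(1) i] b \<beta> j by blast
  then show "\<exists>c\<in>blocks_in P (Xs!i). b \<subseteq> c" using \<beta> j unfolding blocks_in_def by blast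
qed

context
  fixes Qs :: "setpart list"
  assumes length_Qs: "length Qs = length Xs"
    and partition_Qs: "\<And>i. i < length Xs \<Longrightarrow> partition_on (Xs!i) (Qs!i)"
begin

lemma Union_set_Qs: "\<Union>(set Qs) = (\<Union>j<length Xs. Qs!j)"
  using length_Qs by (auto simp: set_conv_nth)

lemma block_Qs_subset: "j < length Xs \<Longrightarrow> p \<in> Qs!j \<Longrightarrow> p \<subseteq> Xs!j"
  using partition_on_block_subset[OF partition_Qs] .

lemma partition_on_glue: "partition_on A (\<Union>(set Qs))"
proof (rule partition_onI)
  show "\<Union>(\<Union>(set Qs)) = A"
  proof (intro equalityI subsetI)
    fix x assume "x \<in> \<Union>(\<Union>(set Qs))"
    then obtain j p where "j < length Xs" "p \<in> Qs!j" "x \<in> p" unfolding Union_set_Qs by blast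
    then show "x \<in> A" using block_Qs_subset piece_subset by blast
  next
    fix x assume "x \<in> A"
    then obtain j where j: "j < length Xs" "x \<in> Xs!j" using piece_exists by blast
    then have "x \<in> \<Union>(Qs!j)" using partition_onD1[OF partition_Qs[OF j(1)]] by blast
    then show "x \<in> \<Union>(\<Union>(set Qs))" unfolding Union_set_Qs using j(1) by blast
  qed
  show "disjnt p q" if pq: "p \<in> \<Union>(set Qs)" "q \<in> \<Union>(set Qs)" "p \<noteq> q" for p q
  proof -
    obtain j k where j: "j < length Xs" "p \<in> Qs!j" and k: "k < length Xs" "q \<in> Qs!k"
      using pq(1,2) unfolding Union_set_Qs by blast
    show ?thesis
    proof (cases "j = k")
      case True
      then show ?thesis using partition_on_block_unique[OF partition_Qs[OF j(1)]] j k pq(3)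
        unfolding disjnt_def by blast
    qed (use piece_unique[OF j(1) k(1)] block_Qs_subset[OF j] block_Qs_subset[OF k] in
          \<open>auto simp: disjnt_def\<close>)
  qed
  show "{} \<notin> \<Union>(set Qs)" using partition_onD3[OF partition_Qs] unfolding Union_set_Qs by blast
qed

lemma fits_pieces_glue: "fits_pieces Xs (\<Union>(set Qs))"
  unfolding fits_pieces_def Union_set_Qs using block_Qs_subset by blast

lemma blocks_in_glue:
  assumes i: "i < length Xs"
  shows "blocks_in (\<Union>(set Qs)) (Xs!i) = Qs!i"
proof (intro equalityI subsetI)
  fix p assume "p \<in> blocks_in (\<Union>(set Qs)) (Xs!i)"
  then obtain j where j: "j < length Xs" "p \<in> Qs!j" and "p \<subseteq> Xs!i"
    unfolding blocks_in_def Union_set_Qs by blast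
  moreover obtain x where "x \<in> p" using partition_on_block_nonempty[OF partition_Qs[OF j(1)] j(2)] by blast
  ultimately have "j = i" using piece_unique[OF j(1) i] block_Qs_subset[OF j] by blast
  then show "p \<in> Qs!i" using j by simp
next
  fix p assume "p \<in> Qs!i"
  then show "p \<in> blocks_in (\<Union>(set Qs)) (Xs!i)"
    using block_Qs_subset[OF i] i unfolding blocks_in_def Union_set_Qs by blast
qed

lemma noncrossing_glue:
  assumes "\<And>i. i < length Xs \<Longrightarrow> noncrossing (Qs!i)"
  shows "noncrossing (\<Union>(set Qs))"
proof (rule noncrossingI)
  fix B1 B2 a b c d
  assume "B1 \<in> \<Union>(set Qs)" "B2 \<in> \<Union>(set Qs)" and order: "a < c" "c < b" "b < d"
    and mem: "a \<in> B1" "b \<in> B1" "c \<in> B2" "d \<in> B2"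
  then obtain j k where j: "j < length Xs" "B1 \<in> Qs!j" and k: "k < length Xs" "B2 \<in> Qs!k"
    unfolding Union_set_Qs by blast
  have "j = k"
    using pieces_noncrossing[OF j(1) k(1) order] block_Qs_subset[OF j] block_Qs_subset[OF k] mem
    by blast
  then show "B1 = B2" using noncrossingD[OF assms[OF j(1)] j(2) _ order mem] k by blast
qed

lemma finer_glue:
  assumes "fits_pieces Xs P'" "\<And>i. i < length Xs \<Longrightarrow> finer (blocks_in P' (Xs!i)) (Qs!i)"
  shows "finer P' (\<Union>(set Qs))"
  unfolding finer_def
proof
  fix b assume "b \<in> P'"
  then obtain i where "i < length Xs" "b \<in> blocks_in P' (Xs!i)"
    using fits_piecesD[OF assms(1)] unfolding blocks_in_def by blast
  then obtain c where "c \<in> Qs!i" "b \<subseteq> c" using finerD[OF assms(2)] by blast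
  moreover have "Qs!i \<in> set Qs" using \<open>i < length Xs\<close> length_Qs by simp
  ultimately show "\<exists>c\<in>\<Union>(set Qs). b \<subseteq> c" by blast
qed

end

lemma fits_pieces_nc_closure:
  assumes P': "partition_on A P'" and nc: "is_nc_closure P' P" and "fits_pieces Xs P'"
  shows "fits_pieces Xs P"
proof -
  have A: "\<Union>P' = A" using partition_onD1[OF P'] by simp
  have P: "partition_on A P" "noncrossing P" "finer P' P" using nc unfolding is_nc_closure_def A by auto
  \<comment> \<open>cutting the blocks of P along the pieces gives a noncrossing coarsening of P'\<close>
  define Rs where "Rs = map (induced P) Xs"
  have Rs: "length Rs = length Xs" "\<And>i. i < length Xs \<Longrightarrow> partition_on (Xs!i) (Rs!i)"
    unfolding Rs_def using partition_on_induced[OF P(1) piece_subset] by auto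
  have "finer P (\<Union>(set Rs))"
  proof -
    have "partition_on A (\<Union>(set Rs))" by (rule partition_on_glue[OF Rs])
    moreover have "noncrossing (\<Union>(set Rs))"
      using noncrossing_glue[OF Rs] noncrossing_induced[OF P(2)] by (simp add: Rs_def)
    moreover have "finer P' (\<Union>(set Rs))"
      using finer_glue[OF Rs \<open>fits_pieces Xs P'\<close>] finer_blocks_in_induced[OF P' P(3)]
      by (simp add: Rs_def)
    ultimately show ?thesis using nc unfolding is_nc_closure_def A by blast
  qed
  then show ?thesis using fits_pieces_finer fits_pieces_glue[OF Rs] by blast
qed

lemma blocks_in_nc_closure:
  assumes P': "partition_on A P'" and nc: "is_nc_closure P' P" and fits': "fits_pieces Xs P'"
    and i: "i < length Xs"
  shows "is_nc_closure (blocks_in P' (Xs!i)) (blocks_in P (Xs!i))"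
proof -
  define X where "X = Xs!i"
  have A: "\<Union>P' = A" using partition_onD1[OF P'] by simp
  have P: "partition_on A P" "noncrossing P" "finer P' P" using nc unfolding is_nc_closure_def A by auto
  have fits: "fits_pieces Xs P" by (rule fits_pieces_nc_closure[OF P' nc fits'])
  have "finer (blocks_in P X) Q"
    if Q: "partition_on X Q" "noncrossing Q" "finer (blocks_in P' X) Q" for Q
  proof -
    \<comment> \<open>replacing the blocks of P inside X by Q gives a noncrossing coarsening of P'\<close>
    define Qs where "Qs = (map (blocks_in P) Xs)[i := Q]"
    have Qs: "length Qs = length Xs" "\<And>j. j < length Xs \<Longrightarrow> partition_on (Xs!j) (Qs!j)"
      using Q(1) partition_on_blocks_in[OF P(1) fits] unfolding Qs_def X_def by (auto simp: nth_list_update i)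
    have "finer P (\<Union>(set Qs))"
    proof -
      have "noncrossing (\<Union>(set Qs))"
        by (rule noncrossing_glue[OF Qs])
          (use Q(2) noncrossing_blocks_in[OF P(2)] in \<open>auto simp: Qs_def X_def nth_list_update i\<close>)
      moreover have "finer P' (\<Union>(set Qs))"
        by (rule finer_glue[OF Qs fits'])
          (use Q(3) finer_blocks_in[OF P' fits P(3)] in \<open>auto simp: Qs_def X_def nth_list_update i\<close>)
      ultimately show ?thesis
        using partition_on_glue[OF Qs] nc unfolding is_nc_closure_def A by blast
    qed
    then show ?thesis
      using finer_blocks_in[OF P(1) fits_pieces_glue[OF Qs] _ i] blocks_in_glue[OF Qs i]
      unfolding Qs_def X_def by (simp add: i)
  qed
  moreover have "\<Union>(blocks_in P' X) = X"
    using partition_onD1[OF partition_on_blocks_in[OF P' fits' i]] unfolding X_def by simp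
  ultimately show ?thesis
    unfolding is_nc_closure_def X_def
    using partition_on_blocks_in[OF P(1) fits i] noncrossing_blocks_in[OF P(2)]
      finer_blocks_in[OF P' fits P(3) i] by auto
qed

lemma is_nc_closure_glue:
  assumes P': "partition_on A P'" and P: "partition_on A P" "noncrossing P"
    and fits': "fits_pieces Xs P'" and fits: "fits_pieces Xs P"
    and local: "\<And>i. i < length Xs \<Longrightarrow> is_nc_closure (blocks_in P' (Xs!i)) (blocks_in P (Xs!i))"
  shows "is_nc_closure P' P"
proof -
  have A: "\<Union>P' = A" using partition_onD1[OF P'] by simp
  have Ps: "length (map (blocks_in P) Xs) = length Xs"
    "\<And>i. i < length Xs \<Longrightarrow> partition_on (Xs!i) (map (blocks_in P) Xs ! i)"
    using partition_on_blocks_in[OF P(1) fits] by auto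
  have "finer P' P"
    using finer_glue[OF Ps fits'] local Union_blocks_in[OF fits] unfolding is_nc_closure_def by simp
  moreover have "finer P Q"
    if Q: "partition_on A Q" "noncrossing Q" "finer P' Q" for Q
    unfolding finer_def
  proof
    fix \<beta> assume "\<beta> \<in> P"
    then obtain i where i: "i < length Xs" "\<beta> \<in> blocks_in P (Xs!i)"
      using fits_piecesD[OF fits] unfolding blocks_in_def by blast
    have "partition_on (Xs!i) (induced Q (Xs!i))" by (rule partition_on_induced[OF Q(1) piece_subset[OF i(1)]])
    moreover have "\<Union>(blocks_in P' (Xs!i)) = Xs!i"
      using partition_onD1[OF partition_on_blocks_in[OF P' fits' i(1)]] by simp
    ultimately have "finer (blocks_in P (Xs!i)) (induced Q (Xs!i))"
      using is_nc_closure_minimal[OF local[OF i(1)]] noncrossing_induced[OF Q(2)]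
        finer_blocks_in_induced[OF P' Q(3)] by simp
    then obtain c where "c \<in> induced Q (Xs!i)" "\<beta> \<subseteq> c" using finerD i(2) by blast
    then show "\<exists>c\<in>Q. \<beta> \<subseteq> c" unfolding induced_def by blast
  qed
  ultimately show ?thesis unfolding is_nc_closure_def A using P by blast
qed

end

definition gap :: "nat \<Rightarrow> nat set \<Rightarrow> nat \<Rightarrow> nat set" where
  "gap n S i = {y \<in> {1..n}. (i = 0 \<or> sorted_list_of_set S ! (i - 1) < y) \<and>
      (i = length (sorted_list_of_set S) \<or> y < sorted_list_of_set S ! i)}"

definition pieces :: "nat \<Rightarrow> nat set \<Rightarrow> nat set list" where
  "pieces n S = S # gaps n S"

lemma length_pieces: "length (pieces n S) = length (sorted_list_of_set S) + 2"
  unfolding pieces_def gaps_def Let_def by simp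

lemma pieces_nth_Suc: "j \<le> length (sorted_list_of_set S) \<Longrightarrow> pieces n S ! Suc j = gap n S j"
  unfolding pieces_def gaps_def gap_def Let_def by (simp del: upt_Suc)

lemma pieces_nth_0: "pieces n S ! 0 = S"
  unfolding pieces_def by simp

lemma pieces_nth:
  "i < length (pieces n S) \<Longrightarrow> pieces n S ! i = (if i = 0 then S else gap n S (i - 1))"
  using pieces_nth_0 pieces_nth_Suc[of "i - 1"] unfolding length_pieces by (cases i) auto

lemma gap_subset: "gap n S i \<subseteq> {1..n}"
  unfolding gap_def by auto

lemma gap_convex: "a \<in> gap n S i \<Longrightarrow> b \<in> gap n S i \<Longrightarrow> a \<le> c \<Longrightarrow> c \<le> b \<Longrightarrow> c \<in> gap n S i"
  unfolding gap_def by auto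

lemma conv_subset_gap:
  assumes "\<beta> \<subseteq> gap n S i" "\<beta> \<noteq> {}"
  shows "conv \<beta> \<subseteq> gap n S i"
proof
  have "finite \<beta>" using finite_subset[OF subset_trans[OF assms(1) gap_subset]] by simp
  then have "Min \<beta> \<in> gap n S i" "Max \<beta> \<in> gap n S i" using assms Min_in Max_in by blast+
  fix c assume "c \<in> conv \<beta>"
  then show "c \<in> gap n S i" using gap_convex[OF \<open>Min \<beta> \<in> _\<close> \<open>Max \<beta> \<in> _\<close>] unfolding conv_def by auto
qed

context
  fixes S :: "nat set" and n :: nat
  assumes S: "S \<subseteq> {1..n}"
begin

private abbreviation "xs \<equiv> sorted_list_of_set S"
private abbreviation "k \<equiv> length (sorted_list_of_set S)"

private lemma set_xs: "set xs = S"
  using S finite_subset by fastforce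

private lemma xs_less: "i < j \<Longrightarrow> j < k \<Longrightarrow> xs!i < xs!j"
  using sorted_wrt_nth_less[OF strict_sorted_list_of_set] by blast

private lemma xs_le: "i \<le> j \<Longrightarrow> j < k \<Longrightarrow> xs!i \<le> xs!j"
  using xs_less by (cases "i = j") (auto intro: less_imp_le)

private lemma xs_in: "i < k \<Longrightarrow> xs!i \<in> S"
  using set_xs nth_mem by blast

lemma gap_notin_set: "i \<le> k \<Longrightarrow> y \<in> gap n S i \<Longrightarrow> y \<notin> S"
proof
  assume i: "i \<le> k" and y: "y \<in> gap n S i" and "y \<in> S"
  then obtain j where j: "j < k" "xs!j = y" using set_xs by (metis in_set_conv_nth)
  show False
  proof (cases "j < i")
    case True
    then have "xs!j \<le> xs!(i-1)" using xs_le[of j "i-1"] i by auto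
    moreover have "xs!(i-1) < y" using y True unfolding gap_def by auto
    ultimately show False using j by simp
  next
    case False
    then have "y < xs!i" using y j unfolding gap_def by auto
    moreover have "xs!i \<le> xs!j" using xs_le[of i j] False j by simp
    ultimately show False using j by simp
  qed
qed

lemma gap_disjoint: "i < j \<Longrightarrow> j \<le> k \<Longrightarrow> gap n S i \<inter> gap n S j = {}"
proof (rule ccontr)
  assume ij: "i < j" "j \<le> k" and "gap n S i \<inter> gap n S j \<noteq> {}"
  then obtain y where "y \<in> gap n S i" "y \<in> gap n S j" by blast
  then have "y < xs!i" "xs!(j-1) < y" using ij unfolding gap_def by auto
  moreover have "xs!i \<le> xs!(j-1)" using xs_le[of i "j-1"] ij by auto
  ultimately show False by simp
qed

lemma gap_exists: "y \<in> {1..n} \<Longrightarrow> y \<notin> S \<Longrightarrow> \<exists>i\<le>k. y \<in> gap n S i"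
proof -
  assume y: "y \<in> {1..n}" "y \<notin> S"
  define i where "i = (LEAST i. i = k \<or> y < xs!i)"
  have upper: "i = k \<or> y < xs!i" unfolding i_def by (rule LeastI[of _ k]) simp
  have ik: "i \<le> k" unfolding i_def by (rule Least_le) simp
  have lower: "i = 0 \<or> xs!(i-1) < y"
  proof (cases "i = 0")
    case False
    then have "\<not> (i - 1 = k \<or> y < xs!(i-1))"
      using not_less_Least[of "i - 1" "\<lambda>i. i = k \<or> y < xs!i"] unfolding i_def[symmetric] by simp
    moreover have "i - 1 < k" using ik False by simp
    then have "xs!(i-1) \<noteq> y" using xs_in y(2) by auto
    ultimately show ?thesis by simp
  qed simp
  show ?thesis using y(1) upper lower ik unfolding gap_def by auto
qed

lemma gap_closed:
  assumes x: "x \<in> gap n S i" and i: "i \<le> k" and y: "y \<in> {1..n}"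
    and no_S_between: "\<And>s. s \<in> S \<Longrightarrow> \<not> (min x y \<le> s \<and> s \<le> max x y)"
  shows "y \<in> gap n S i"
proof -
  have "i = 0 \<or> xs!(i-1) < y"
  proof (cases "i = 0")
    case False
    then have "xs!(i-1) < x" "xs!(i-1) \<in> S" using x xs_in[of "i-1"] i unfolding gap_def by auto
    then show ?thesis using no_S_between[of "xs!(i-1)"] by (cases "xs!(i-1) < y") auto
  qed simp
  moreover have "i = k \<or> y < xs!i"
  proof (cases "i = k")
    case False
    then have "x < xs!i" "xs!i \<in> S" using x xs_in[of i] i unfolding gap_def by auto
    then show ?thesis using no_S_between[of "xs!i"] by (cases "y < xs!i") auto
  qed simp
  ultimately show ?thesis using y unfolding gap_def by auto
qed

lemma pieces_disjoint:
  assumes i: "i < length (pieces n S)" and j: "j < length (pieces n S)"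
    and x: "x \<in> pieces n S ! i" "x \<in> pieces n S ! j"
  shows "i = j"
proof -
  have False if pq: "p < q" "q < length (pieces n S)" "x \<in> pieces n S ! p" "x \<in> pieces n S ! q"
    for p q
  proof -
    have q: "q - 1 \<le> k" "x \<in> gap n S (q - 1)"
      using pq by (simp_all add: pieces_nth length_pieces)
    show False
    proof (cases "p = 0")
      case True
      then show False using gap_notin_set[OF q] pq(3) by (simp add: pieces_nth_0)
    next
      case False
      then have "x \<in> gap n S (p - 1)" "p - 1 < q - 1" using pq by (simp_all add: pieces_nth)
      then show False using gap_disjoint[OF _ q(1)] q(2) by blast
    qed
  qed
  then show ?thesis using i j x by (cases i j rule: linorder_cases) auto
qed

lemma gap_between:
  assumes "a \<in> gap n S g" "b \<in> gap n S g" "a < c" "c < b" "g \<le> k"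
    and q: "q < length (pieces n S)" "c \<in> pieces n S ! q"
  shows "q = Suc g"
proof -
  have "c \<in> pieces n S ! Suc g" using gap_convex[of a n S g b c] assms pieces_nth_Suc by simp
  then show ?thesis using pieces_disjoint[OF q(1) _ q(2)] assms(5) by (simp add: length_pieces)
qed

lemma pieces_cover:
  assumes "x \<in> {1..n}"
  shows "\<exists>i<length (pieces n S). x \<in> pieces n S ! i"
proof (cases "x \<in> S")
  case True
  then show ?thesis using pieces_nth_0 by (intro exI[of _ 0]) (simp add: length_pieces)
next
  case False
  then obtain j where "j \<le> k" "x \<in> gap n S j" using gap_exists assms by blast
  then show ?thesis using pieces_nth_Suc by (intro exI[of _ "Suc j"]) (simp add: length_pieces)
qed

lemma pieces_no_crossing:
  assumes i: "i < length (pieces n S)" and j: "j < length (pieces n S)"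
    and order: "a < c" "c < b" "b < d"
    and mem: "a \<in> pieces n S ! i" "b \<in> pieces n S ! i" "c \<in> pieces n S ! j" "d \<in> pieces n S ! j"
  shows "i = j"
proof (cases "i = 0")
  case True
  show ?thesis
  proof (cases "j = 0")
    case False
    then have "c \<in> gap n S (j - 1)" "d \<in> gap n S (j - 1)" "j - 1 \<le> k"
      using mem j by (simp_all add: pieces_nth length_pieces)
    then show ?thesis using gap_between[OF _ _ order(2,3) _ i mem(2)] False by simp
  qed (use True in simp)
next
  case False
  then have "a \<in> gap n S (i - 1)" "b \<in> gap n S (i - 1)" "i - 1 \<le> k"
    using mem i by (simp_all add: pieces_nth length_pieces)
  then show ?thesis using gap_between[OF _ _ order(1,2) _ j mem(3)] False by simp
qed

lemma noncrossing_decomp_pieces: "noncrossing_decomp {1..n} (pieces n S)"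
  unfolding noncrossing_decomp_def
proof (intro conjI allI impI ballI)
  fix i assume "i < length (pieces n S)"
  then show "pieces n S ! i \<subseteq> {1..n}" using S gap_subset by (simp add: pieces_nth)
next
  fix x assume "x \<in> {1..n}"
  then show "\<exists>i<length (pieces n S). x \<in> pieces n S ! i" by (rule pieces_cover)
next
  fix i j x assume "i < length (pieces n S)" "j < length (pieces n S)"
    "x \<in> pieces n S ! i" "x \<in> pieces n S ! j"
  then show "i = j" by (rule pieces_disjoint)
next
  fix i j a b c d assume "i < length (pieces n S)" "j < length (pieces n S)" "a < c" "c < b" "b < d"
    "a \<in> pieces n S ! i" "b \<in> pieces n S ! i" "c \<in> pieces n S ! j" "d \<in> pieces n S ! j"
  then show "i = j" by (rule pieces_no_crossing)
qed

lemma subset_gap_if_conv_disjoint: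
  assumes \<beta>: "\<beta> \<subseteq> {1..n}" "\<beta> \<noteq> {}" and disj: "conv \<beta> \<inter> S = {}"
  obtains j where "j \<le> k" "\<beta> \<subseteq> gap n S j"
proof -
  have fin: "finite \<beta>" using \<beta>(1) finite_subset by blast
  obtain x where x: "x \<in> \<beta>" using \<beta>(2) by blast
  have conv: "s \<in> conv \<beta>" if "y \<in> \<beta>" "min x y \<le> s" "s \<le> max x y" for y s
  proof -
    have "Min \<beta> \<le> min x y" "max x y \<le> Max \<beta>" using x that(1) fin by auto
    then show ?thesis using that(2,3) unfolding conv_def by auto
  qed
  have "x \<notin> S" using conv[OF x, of x] disj by auto
  then obtain j where j: "j \<le> k" "x \<in> gap n S j" using gap_exists x \<beta>(1) by blast
  have "\<beta> \<subseteq> gap n S j"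
  proof
    fix y assume y: "y \<in> \<beta>"
    show "y \<in> gap n S j" by (rule gap_closed[OF j(2,1)]) (use y \<beta>(1) disj conv[OF y] in auto)
  qed
  then show thesis using that j(1) by blast
qed

lemma fits_some_piece_iff:
  assumes \<beta>: "\<beta> \<subseteq> {1..n}" "\<beta> \<noteq> {}"
  shows "(\<exists>i<length (pieces n S). \<beta> \<subseteq> pieces n S ! i) \<longleftrightarrow> \<beta> \<subseteq> S \<or> conv \<beta> \<inter> S = {}"
proof
  assume "\<exists>i<length (pieces n S). \<beta> \<subseteq> pieces n S ! i"
  then obtain i where i: "i < length (pieces n S)" "\<beta> \<subseteq> pieces n S ! i" by blast
  show "\<beta> \<subseteq> S \<or> conv \<beta> \<inter> S = {}"
  proof (cases "i = 0")
    case False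
    then have "\<beta> \<subseteq> gap n S (i - 1)" "i - 1 \<le> k" using i by (simp_all add: pieces_nth length_pieces)
    then show ?thesis using conv_subset_gap[OF _ \<beta>(2)] gap_notin_set by blast
  qed (use i pieces_nth_0 in simp)
next
  assume "\<beta> \<subseteq> S \<or> conv \<beta> \<inter> S = {}"
  then show "\<exists>i<length (pieces n S). \<beta> \<subseteq> pieces n S ! i"
  proof
    assume "\<beta> \<subseteq> S"
    then show ?thesis using pieces_nth_0 by (intro exI[of _ 0]) (simp add: length_pieces)
  next
    assume "conv \<beta> \<inter> S = {}"
    then obtain j where "j \<le> k" "\<beta> \<subseteq> gap n S j" using subset_gap_if_conv_disjoint[OF \<beta>] by blast
    then show ?thesis using pieces_nth_Suc by (intro exI[of _ "Suc j"]) (simp add: length_pieces)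
  qed
qed

end

lemma arrowI: "\<pi> \<in> P \<Longrightarrow> \<rho> \<in> P \<Longrightarrow> y \<in> conv \<pi> \<Longrightarrow> y \<in> \<rho> \<Longrightarrow> (\<pi>, \<rho>) \<in> arrow P"
  unfolding arrow_def by blast

lemma arrowD: "(\<pi>, \<rho>) \<in> arrow P \<Longrightarrow> \<pi> \<in> P \<and> \<rho> \<in> P \<and> conv \<pi> \<inter> \<rho> \<noteq> {}"
  unfolding arrow_def by blast

lemma arrow_trancl_target: "(\<pi>, \<rho>) \<in> (arrow P)\<^sup>+ \<Longrightarrow> \<rho> \<in> P"
  by (induction rule: trancl_induct) (auto dest: arrowD)

context
  fixes n :: nat and P :: setpart
  assumes P: "partition_on {1..n} P"
begin

lemma degree_eq: "degree P = n"
  using partition_onD1[OF P] unfolding degree_def by (metis card_atLeastAtMost diff_Suc_1)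

lemma block_subset: "\<beta> \<in> P \<Longrightarrow> \<beta> \<subseteq> {1..n}"
  using partition_on_block_subset[OF P] .

lemma block_nonempty: "\<beta> \<in> P \<Longrightarrow> \<beta> \<noteq> {}"
  using partition_onD3[OF P] by blast

lemma fits_pieces_cut:
  assumes L: "L \<in> cuts P"
  shows "fits_pieces (pieces n (\<Union>L)) P"
  unfolding fits_pieces_def
proof
  have LP: "L \<subseteq> P" and up: "upperset P (P - L)"
    using L unfolding cuts_def lowerset_def by auto
  have S: "\<Union>L \<subseteq> {1..n}" using LP block_subset by blast
  fix \<beta> assume \<beta>: "\<beta> \<in> P"
  have "conv \<beta> \<inter> \<Union>L = {}" if "\<beta> \<notin> L"
  proof (rule ccontr)
    assume "conv \<beta> \<inter> \<Union>L \<noteq> {}"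
    then obtain y \<pi> where y: "y \<in> conv \<beta>" "\<pi> \<in> L" "y \<in> \<pi>" by blast
    then have "(\<beta>, \<pi>) \<in> arrow P" using arrowI[OF \<beta>] LP by blast
    then have "\<pi> \<in> P - L" using up \<beta> that unfolding upperset_def by blast
    then show False using y(2) by blast
  qed
  then have "\<beta> \<subseteq> \<Union>L \<or> conv \<beta> \<inter> \<Union>L = {}" by blast
  then show "\<exists>i<length (pieces n (\<Union>L)). \<beta> \<subseteq> pieces n (\<Union>L) ! i"
    using fits_some_piece_iff[OF S block_subset[OF \<beta>] block_nonempty[OF \<beta>]] by simp
qed

lemma cut_if_fits_pieces:
  assumes LP: "L \<subseteq> P" and fits: "fits_pieces (pieces n (\<Union>L)) P"
  shows "L \<in> cuts P"
proof -
  have S: "\<Union>L \<subseteq> {1..n}" using LP block_subset by blast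
  have step: "\<sigma> \<in> L" if "(\<sigma>, \<pi>) \<in> arrow P" "\<pi> \<in> L" for \<sigma> \<pi>
  proof -
    have \<sigma>: "\<sigma> \<in> P" "conv \<sigma> \<inter> \<pi> \<noteq> {}" using arrowD[OF that(1)] by auto
    have "\<sigma> \<subseteq> \<Union>L \<or> conv \<sigma> \<inter> \<Union>L = {}"
      using fits_some_piece_iff[OF S block_subset[OF \<sigma>(1)] block_nonempty[OF \<sigma>(1)]]
        fits_piecesD[OF fits \<sigma>(1)] by simp
    then have "\<sigma> \<subseteq> \<Union>L" using \<sigma>(2) that(2) by blast
    then obtain x \<pi>' where "x \<in> \<sigma>" "\<pi>' \<in> L" "x \<in> \<pi>'"
      using block_nonempty[OF \<sigma>(1)] by blast
    then show "\<sigma> \<in> L" using partition_on_block_unique[OF P \<sigma>(1)] LP by blast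
  qed
  have lower: "lowerset P L"
    unfolding lowerset_def
  proof (intro conjI ballI allI impI)
    fix \<pi> \<sigma> assume "\<pi> \<in> L" and "(\<sigma>, \<pi>) \<in> (arrow P)\<^sup>+"
    from this(2,1) show "\<sigma> \<in> L" by (induction rule: converse_trancl_induct) (auto intro: step)
  qed (rule LP)
  have "upperset P (P - L)"
    unfolding upperset_def
  proof (intro conjI ballI allI impI)
    fix \<pi> \<rho> assume "\<pi> \<in> P - L" "(\<pi>, \<rho>) \<in> (arrow P)\<^sup>+"
    then show "\<rho> \<in> P - L" using lower arrow_trancl_target unfolding lowerset_def by blast
  qed blast
  then show ?thesis unfolding cuts_def using lower by blast
qed

lemma cut_iff: "L \<in> cuts P \<longleftrightarrow> L \<subseteq> P \<and> fits_pieces (pieces n (\<Union>L)) P"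
proof -
  have "L \<in> cuts P \<Longrightarrow> L \<subseteq> P" unfolding cuts_def lowerset_def by blast
  then show ?thesis using fits_pieces_cut cut_if_fits_pieces by blast
qed

lemma finite_cuts: "finite (cuts P)"
proof -
  have "finite P" using finite_elements[OF _ P] by simp
  moreover have "cuts P \<subseteq> Pow P" unfolding cuts_def lowerset_def by blast
  ultimately show ?thesis using finite_subset by blast
qed

lemma cut_subset_n: "L \<in> cuts P \<Longrightarrow> \<Union>L \<subseteq> {1..n}"
  using block_subset unfolding cut_iff by blast

lemma cut_eq_blocks_in:
  assumes "L \<in> cuts P"
  shows "L = blocks_in P (\<Union>L)"
proof (intro equalityI subsetI)
  have LP: "L \<subseteq> P" using assms unfolding cut_iff by blast
  show "\<beta> \<in> blocks_in P (\<Union>L)" if "\<beta> \<in> L" for \<beta> using that LP unfolding blocks_in_def by blast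
  fix \<beta> assume "\<beta> \<in> blocks_in P (\<Union>L)"
  then have \<beta>: "\<beta> \<in> P" "\<beta> \<subseteq> \<Union>L" unfolding blocks_in_def by auto
  then obtain x \<pi> where "x \<in> \<beta>" "\<pi> \<in> L" "x \<in> \<pi>" using block_nonempty by blast
  then show "\<beta> \<in> L" using partition_on_block_unique[OF P \<beta>(1)] LP by blast
qed

lemma blocks_in_cut:
  assumes S: "S \<subseteq> {1..n}" and fits: "fits_pieces (pieces n S) P"
  shows "blocks_in P S \<in> cuts P" "\<Union>(blocks_in P S) = S"
proof -
  have "partition_on (pieces n S ! 0) (blocks_in P (pieces n S ! 0))"
    using partition_on_blocks_in[OF noncrossing_decomp_pieces[OF S] P fits]
    by (simp add: length_pieces)
  then show U: "\<Union>(blocks_in P S) = S" using partition_onD1 pieces_nth_0 by metis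
  show "blocks_in P S \<in> cuts P" unfolding cut_iff U using fits unfolding blocks_in_def by blast
qed

lemma upper_parts_eq:
  assumes L: "L \<in> cuts P"
  shows "upper_parts P L = map (\<lambda>D. std (blocks_in P D)) (gaps n (\<Union>L))"
proof -
  have "induced P D = blocks_in P D" if D: "D \<in> set (gaps n (\<Union>L))" for D
  proof -
    obtain j where "j < length (gaps n (\<Union>L))" "gaps n (\<Union>L) ! j = D"
      using D unfolding in_set_conv_nth by blast
    then have "Suc j < length (pieces n (\<Union>L))" "pieces n (\<Union>L) ! Suc j = D"
      unfolding pieces_def by auto
    then show ?thesis
      using induced_eq_blocks_in[OF noncrossing_decomp_pieces[OF cut_subset_n[OF L]] P
          fits_pieces_cut[OF L]] by metis
  qed
  then show ?thesis unfolding upper_parts_def degree_eq by (simp cong: map_cong)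
qed

end

section \<open>Relabelling and standardisation\<close>

definition relabel :: "(nat \<Rightarrow> nat) \<Rightarrow> setpart \<Rightarrow> setpart" where
  "relabel f Q = (`) f ` Q"

lemma std_eq_relabel: "partition_on X Q \<Longrightarrow> std Q = relabel (rank_in X) Q"
  using partition_onD1[of X Q] unfolding std_def relabel_def by simp

lemma Union_relabel: "\<Union>(relabel f Q) = f ` \<Union>Q"
  unfolding relabel_def by blast

lemma relabel_relabel:
  assumes "\<And>x. x \<in> \<Union>Q \<Longrightarrow> g (f x) = x"
  shows "relabel g (relabel f Q) = Q"
proof -
  have "relabel g (relabel f Q) = (\<lambda>b. (g \<circ> f) ` b) ` Q" unfolding relabel_def by (simp add: image_comp)
  also have "\<dots> = (\<lambda>b. b) ` Q" using assms by (intro image_cong) force+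
  finally show ?thesis by simp
qed

lemma partition_on_relabel:
  assumes "partition_on A Q" "inj_on f A"
  shows "partition_on (f ` A) (relabel f Q)"
proof -
  have "relabel f Q - {{}} = relabel f Q" using partition_onD3[OF assms(1)] unfolding relabel_def by auto
  then show ?thesis using partition_on_inj_image[OF assms] unfolding relabel_def by simp
qed

lemma noncrossing_relabel:
  assumes nc: "noncrossing Q" and f: "strict_mono_on (\<Union>Q) f"
  shows "noncrossing (relabel f Q)"
proof (rule noncrossingI)
  fix B1 B2 a b c d
  assume "B1 \<in> relabel f Q" "B2 \<in> relabel f Q" and order: "a < c" "c < b" "b < d"
    and mem: "a \<in> B1" "b \<in> B1" "c \<in> B2" "d \<in> B2"
  then obtain b1 b2 where b1: "b1 \<in> Q" "B1 = f ` b1" and b2: "b2 \<in> Q" "B2 = f ` b2"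
    unfolding relabel_def by blast
  obtain a' b' c' d' where a'b': "a' \<in> b1" "a = f a'" "b' \<in> b1" "b = f b'"
    and c'd': "c' \<in> b2" "c = f c'" "d' \<in> b2" "d = f d'"
    using mem b1 b2 by blast
  have U: "a' \<in> \<Union>Q" "b' \<in> \<Union>Q" "c' \<in> \<Union>Q" "d' \<in> \<Union>Q" using a'b' c'd' b1 b2 by auto
  have "a' < c'" "c' < b'" "b' < d'"
    using strict_mono_on_less[OF f] U order a'b' c'd' by auto
  then have "b1 = b2" using noncrossingD[OF nc b1(1) b2(1)] a'b' c'd' by blast
  then show "B1 = B2" using b1 b2 by simp
qed

lemma finer_relabel:
  assumes "finer P Q"
  shows "finer (relabel f P) (relabel f Q)"
  unfolding finer_def
proof
  fix b' assume "b' \<in> relabel f P"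
  then obtain b where "b \<in> P" "b' = f ` b" unfolding relabel_def by blast
  moreover obtain c where "c \<in> Q" "b \<subseteq> c" using finerD[OF assms \<open>b \<in> P\<close>] by blast
  ultimately show "\<exists>c'\<in>relabel f Q. b' \<subseteq> c'" unfolding relabel_def by blast
qed

lemma strict_mono_on_the_inv_into:
  fixes f :: "nat \<Rightarrow> nat"
  assumes f: "strict_mono_on A f"
  shows "strict_mono_on (f ` A) (the_inv_into A f)"
proof (rule strict_mono_onI)
  fix r s assume "r \<in> f ` A" "s \<in> f ` A" "r < s"
  then obtain x y where "x \<in> A" "y \<in> A" "r = f x" "s = f y" "f x < f y" by blast
  then show "the_inv_into A f r < the_inv_into A f s"
    using strict_mono_on_less[OF f] the_inv_into_f_f[OF strict_mono_on_imp_inj_on[OF f]] by auto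
qed

lemma is_nc_closure_relabel:
  fixes f :: "nat \<Rightarrow> nat"
  assumes nc: "is_nc_closure P Q" and P: "partition_on A P" and f: "strict_mono_on A f"
  shows "is_nc_closure (relabel f P) (relabel f Q)"
proof -
  have A: "\<Union>P = A" using partition_onD1[OF P] by simp
  have Q: "partition_on A Q" "noncrossing Q" "finer P Q" using is_nc_closureD[OF nc] unfolding A by auto
  have inj: "inj_on f A" by (rule strict_mono_on_imp_inj_on[OF f])
  define g where "g = the_inv_into A f"
  have g: "strict_mono_on (f ` A) g" unfolding g_def by (rule strict_mono_on_the_inv_into[OF f])
  have gf: "\<And>x. x \<in> A \<Longrightarrow> g (f x) = x" and fg: "\<And>y. y \<in> f ` A \<Longrightarrow> f (g y) = y"
    unfolding g_def using the_inv_into_f_f[OF inj] f_the_inv_into_f[OF inj] by auto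
  have "finer (relabel f Q) Q'"
    if Q': "partition_on (f ` A) Q'" "noncrossing Q'" "finer (relabel f P) Q'" for Q'
  proof -
    have UQ': "\<Union>Q' = f ` A" using partition_onD1[OF Q'(1)] by simp
    have "partition_on A (relabel g Q')"
      using partition_on_relabel[OF Q'(1) strict_mono_on_imp_inj_on[OF g]]
      unfolding g_def the_inv_into_onto[OF inj] .
    moreover have "noncrossing (relabel g Q')" using noncrossing_relabel[OF Q'(2)] g UQ' by simp
    moreover have "finer P (relabel g Q')"
      using finer_relabel[OF Q'(3), of g] relabel_relabel[of P g f] gf A by simp
    ultimately have "finer Q (relabel g Q')" using is_nc_closure_minimal[OF nc] A by simp
    then have "finer (relabel f Q) (relabel f (relabel g Q'))" by (rule finer_relabel)
    moreover have "relabel f (relabel g Q') = Q'" by (rule relabel_relabel) (use fg UQ' in simp)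
    ultimately show ?thesis by simp
  qed
  moreover have "partition_on (f ` A) (relabel f Q)" by (rule partition_on_relabel[OF Q(1) inj])
  moreover have "noncrossing (relabel f Q)"
    using noncrossing_relabel[OF Q(2)] f partition_onD1[OF Q(1)] by simp
  ultimately show ?thesis
    unfolding is_nc_closure_def Union_relabel A using finer_relabel[OF Q(3)] by blast
qed

context
  fixes X :: "nat set"
  assumes fin: "finite X"
begin

lemma strict_mono_on_rank_in: "strict_mono_on X (rank_in X)"
proof (rule strict_mono_onI)
  fix r s assume "r \<in> X" "s \<in> X" "r < s"
  then have "{y \<in> X. y \<le> r} \<subseteq> {y \<in> X. y \<le> s}" "s \<in> {y \<in> X. y \<le> s} - {y \<in> X. y \<le> r}"
    by auto
  then have "{y \<in> X. y \<le> r} \<subset> {y \<in> X. y \<le> s}" by blast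
  then show "rank_in X r < rank_in X s" unfolding rank_in_def by (rule psubset_card_mono[rotated]) (use fin in simp)
qed

lemma rank_in_image: "rank_in X ` X = {1..card X}"
proof -
  have inj: "inj_on (rank_in X) X" by (rule strict_mono_on_imp_inj_on[OF strict_mono_on_rank_in])
  have "rank_in X x \<in> {1..card X}" if "x \<in> X" for x
  proof -
    have "{z \<in> X. z \<le> x} \<noteq> {}" "{z \<in> X. z \<le> x} \<subseteq> X" using that by auto
    then show ?thesis unfolding rank_in_def using fin
      by (simp add: Suc_leI card_gt_0_iff card_mono finite_subset)
  qed
  then show ?thesis using card_subset_eq[of "{1..card X}"] card_image[OF inj] by (simp add: image_subsetI)
qed

abbreviation unrank :: "nat \<Rightarrow> nat" where
  "unrank \<equiv> the_inv_into X (rank_in X)"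

lemma unrank_rank_in: "x \<in> X \<Longrightarrow> unrank (rank_in X x) = x"
  using the_inv_into_f_f[OF strict_mono_on_imp_inj_on[OF strict_mono_on_rank_in]] .

lemma rank_in_unrank: "y \<in> {1..card X} \<Longrightarrow> rank_in X (unrank y) = y"
  using f_the_inv_into_f[OF strict_mono_on_imp_inj_on[OF strict_mono_on_rank_in]] rank_in_image
  by blast

lemma strict_mono_on_unrank: "strict_mono_on {1..card X} unrank"
  using strict_mono_on_the_inv_into[OF strict_mono_on_rank_in] rank_in_image by simp

lemma partition_on_relabel_unrank: "partition_on {1..card X} B \<Longrightarrow> partition_on X (relabel unrank B)"
  using partition_on_relabel[OF _ strict_mono_on_imp_inj_on[OF strict_mono_on_unrank]]
    the_inv_into_onto[OF strict_mono_on_imp_inj_on[OF strict_mono_on_rank_in]] rank_in_image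
  by metis

lemma partition_on_std: "partition_on X Q \<Longrightarrow> partition_on {1..card X} (std Q)"
  using partition_on_relabel[of X Q "rank_in X"] std_eq_relabel rank_in_image
    strict_mono_on_imp_inj_on[OF strict_mono_on_rank_in] by simp

lemma degree_std: "partition_on X Q \<Longrightarrow> degree (std Q) = card X"
  using partition_onD1[OF partition_on_std] unfolding degree_def by (metis card_atLeastAtMost diff_Suc_1)

lemma unrank_std:
  assumes Q: "partition_on X Q"
  shows "relabel unrank (std Q) = Q"
  unfolding std_eq_relabel[OF Q]
proof (rule relabel_relabel)
  fix x assume "x \<in> \<Union>Q"
  then show "unrank (rank_in X x) = x" using partition_onD1[OF Q] unrank_rank_in by simp
qed

lemma std_unrank:
  assumes B: "partition_on {1..card X} B"
  shows "std (relabel unrank B) = B"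
proof -
  have "partition_on X (relabel unrank B)" by (rule partition_on_relabel_unrank[OF B])
  then have "std (relabel unrank B) = relabel (rank_in X) (relabel unrank B)" by (rule std_eq_relabel)
  also have "\<dots> = B"
  proof (rule relabel_relabel)
    fix y assume "y \<in> \<Union>B"
    then show "rank_in X (unrank y) = y" using partition_onD1[OF B] rank_in_unrank by simp
  qed
  finally show ?thesis .
qed

lemma std_inj:
  assumes Q1: "partition_on X Q1" and Q2: "partition_on X Q2" and "std Q1 = std Q2"
  shows "Q1 = Q2"
proof -
  have "Q1 = relabel unrank (std Q1)" using unrank_std[OF Q1] by simp
  also have "\<dots> = relabel unrank (std Q2)" using \<open>std Q1 = std Q2\<close> by simp
  also have "\<dots> = Q2" using unrank_std[OF Q2] .
  finally show ?thesis .
qed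

lemma std_surj:
  assumes B: "partition_on {1..card X} B"
  shows "\<exists>Q. partition_on X Q \<and> std Q = B"
  using partition_on_relabel_unrank[OF B] std_unrank[OF B] by blast

lemma mem_nc_fibre_std_iff:
  assumes Q: "partition_on X Q"
  shows "B \<in> nc_fibre (std Q) \<longleftrightarrow> (\<exists>Q'. partition_on X Q' \<and> B = std Q' \<and> is_nc_closure Q' Q)"
  unfolding nc_fibre_def mem_Collect_eq
proof
  assume "is_part_of (degree (std Q)) B \<and> nc_closure B = std Q"
  then have B: "partition_on {1..card X} B" and nc: "is_nc_closure B (std Q)"
    using nc_closure_eq_iff unfolding is_part_of_def degree_std[OF Q] by blast+
  obtain Q' where Q': "partition_on X Q'" "std Q' = B" using std_surj[OF B] by blast
  have "is_nc_closure (relabel unrank B) (relabel unrank (std Q))"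
    by (rule is_nc_closure_relabel[OF nc B strict_mono_on_unrank])
  then have "is_nc_closure Q' Q" using unrank_std[OF Q] unrank_std[OF Q'(1)] Q'(2) by simp
  then show "\<exists>Q'. partition_on X Q' \<and> B = std Q' \<and> is_nc_closure Q' Q" using Q' by blast
next
  assume "\<exists>Q'. partition_on X Q' \<and> B = std Q' \<and> is_nc_closure Q' Q"
  then obtain Q' where Q': "partition_on X Q'" "B = std Q'" "is_nc_closure Q' Q" by blast
  have "is_nc_closure B (std Q)"
    using is_nc_closure_relabel[OF Q'(3) Q'(1) strict_mono_on_rank_in]
    unfolding Q'(2) std_eq_relabel[OF Q'(1)] std_eq_relabel[OF Q] .
  then show "is_part_of (degree (std Q)) B \<and> nc_closure B = std Q"
    using nc_closure_eq_iff partition_on_std[OF Q'(1)] Q'(2)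
    unfolding is_part_of_def degree_std[OF Q] by blast
qed

end

section \<open>The bijection on cuts\<close>

\<comment> \<open>the bijection behind the coproduct identity on a noncrossing generator\<close>
definition split_cut :: "nat \<Rightarrow> setpart \<Rightarrow> setpart \<times> nat set set \<Rightarrow> nat set set \<times> setpart list" where
  "split_cut n P = (\<lambda>(P', L'). (blocks_in P (\<Union>L'), map (\<lambda>X. std (blocks_in P' X)) (pieces n (\<Union>L'))))"

definition fibre_lists :: "nat \<Rightarrow> setpart \<Rightarrow> nat set set \<Rightarrow> setpart list set" where
  "fibre_lists n P L =
     {Cs. list_all2 (\<lambda>C X. C \<in> nc_fibre (std (blocks_in P X))) Cs (pieces n (\<Union>L))}"

lemma std_blocks_in_mem_nc_fibre:
  assumes P': "partition_on {1..n} P'" and nc: "is_nc_closure P' P"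
    and decomp: "noncrossing_decomp {1..n} Xs" and fits: "fits_pieces Xs P'" and i: "i < length Xs"
  shows "std (blocks_in P' (Xs!i)) \<in> nc_fibre (std (blocks_in P (Xs!i)))"
proof -
  have fin: "finite (Xs!i)" using piece_subset[OF decomp i] finite_subset by blast
  have P: "partition_on {1..n} P" using is_nc_closureD(1)[OF nc] partition_onD1[OF P'] by simp
  show ?thesis
    using mem_nc_fibre_std_iff[OF fin partition_on_blocks_in[OF decomp P fits_pieces_nc_closure[OF decomp P' nc fits] i]]
      partition_on_blocks_in[OF decomp P' fits i] blocks_in_nc_closure[OF decomp P' nc fits i]
    by blast
qed

context
  fixes n :: nat and P :: setpart
  assumes P: "partition_on {1..n} P"
begin

lemma mem_nc_fibre_iff: "P' \<in> nc_fibre P \<longleftrightarrow> partition_on {1..n} P' \<and> is_nc_closure P' P"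
  unfolding nc_fibre_def is_part_of_def degree_eq[OF P] using nc_closure_eq_iff by blast

lemma split_cut_mem:
  assumes P': "partition_on {1..n} P'" and nc: "is_nc_closure P' P" and L': "L' \<in> cuts P'"
  shows "split_cut n P (P', L') \<in> Sigma (cuts P) (fibre_lists n P)"
proof -
  define S where "S = \<Union>L'"
  have S: "S \<subseteq> {1..n}" unfolding S_def by (rule cut_subset_n[OF P' L'])
  have decomp: "noncrossing_decomp {1..n} (pieces n S)" by (rule noncrossing_decomp_pieces[OF S])
  have fits': "fits_pieces (pieces n S) P'" unfolding S_def by (rule fits_pieces_cut[OF P' L'])
  have fits: "fits_pieces (pieces n S) P" by (rule fits_pieces_nc_closure[OF decomp P' nc fits'])
  have "map (\<lambda>X. std (blocks_in P' X)) (pieces n S) \<in> fibre_lists n P (blocks_in P S)"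
    unfolding fibre_lists_def blocks_in_cut(2)[OF P S fits] list_all2_conv_all_nth
    using std_blocks_in_mem_nc_fibre[OF P' nc decomp fits'] by simp
  then show ?thesis
    using blocks_in_cut(1)[OF P S fits] unfolding split_cut_def S_def by simp
qed

lemma split_cut_inj:
  assumes P1: "partition_on {1..n} P1" "is_nc_closure P1 P" "L1 \<in> cuts P1"
    and P2: "partition_on {1..n} P2" "is_nc_closure P2 P" "L2 \<in> cuts P2"
    and eq: "split_cut n P (P1, L1) = split_cut n P (P2, L2)"
  shows "P1 = P2" "L1 = L2"
proof -
  define S where "S = \<Union>L1"
  have S: "S \<subseteq> {1..n}" "\<Union>L2 \<subseteq> {1..n}" unfolding S_def using cut_subset_n P1 P2 by blast+
  have fits1: "fits_pieces (pieces n S) P1" "fits_pieces (pieces n (\<Union>L2)) P2"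
    unfolding S_def using fits_pieces_cut P1 P2 by blast+
  have "\<Union>(blocks_in P S) = \<Union>(blocks_in P (\<Union>L2))" using eq unfolding split_cut_def S_def by simp
  then have SS: "\<Union>L2 = S"
    using blocks_in_cut(2)[OF P] S fits_pieces_nc_closure[OF noncrossing_decomp_pieces] fits1 P1 P2
    by metis
  define Xs where "Xs = pieces n S"
  have decomp: "noncrossing_decomp {1..n} Xs" unfolding Xs_def by (rule noncrossing_decomp_pieces[OF S(1)])
  have fits: "fits_pieces Xs P1" "fits_pieces Xs P2" using fits1 SS unfolding Xs_def by auto
  have "map (\<lambda>X. std (blocks_in P1 X)) Xs = map (\<lambda>X. std (blocks_in P2 X)) Xs"
    using eq SS unfolding split_cut_def Xs_def S_def by simp
  then have "map (blocks_in P1) Xs = map (blocks_in P2) Xs"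
  proof (intro nth_equalityI)
    fix i assume "map (\<lambda>X. std (blocks_in P1 X)) Xs = map (\<lambda>X. std (blocks_in P2 X)) Xs"
      and "i < length (map (blocks_in P1) Xs)"
    then have i: "i < length Xs" and "std (blocks_in P1 (Xs!i)) = std (blocks_in P2 (Xs!i))"
      by (simp_all add: map_eq_conv)
    then show "map (blocks_in P1) Xs ! i = map (blocks_in P2) Xs ! i"
      using std_inj[OF _ partition_on_blocks_in[OF decomp P1(1) fits(1) i]
          partition_on_blocks_in[OF decomp P2(1) fits(2) i]] piece_subset[OF decomp i] finite_subset
      by auto
  qed simp
  then show "P1 = P2" using Union_blocks_in[OF fits(1)] Union_blocks_in[OF fits(2)] by simp
  have "blocks_in P1 S = blocks_in P2 S"
    using \<open>map (blocks_in P1) Xs = map (blocks_in P2) Xs\<close> unfolding Xs_def pieces_def by simp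
  then show "L1 = L2"
    using cut_eq_blocks_in[OF P1(1,3)] cut_eq_blocks_in[OF P2(1,3)] SS unfolding S_def by simp
qed

lemma split_cut_surj:
  assumes nc: "noncrossing P" and L: "L \<in> cuts P" and Cs: "Cs \<in> fibre_lists n P L"
  shows "\<exists>P' L'. partition_on {1..n} P' \<and> is_nc_closure P' P \<and> L' \<in> cuts P' \<and>
    split_cut n P (P', L') = (L, Cs)"
proof -
  define S where "S = \<Union>L"
  define Xs where "Xs = pieces n S"
  have S: "S \<subseteq> {1..n}" unfolding S_def by (rule cut_subset_n[OF P L])
  have decomp: "noncrossing_decomp {1..n} Xs" unfolding Xs_def by (rule noncrossing_decomp_pieces[OF S])
  have fits: "fits_pieces Xs P" unfolding Xs_def S_def by (rule fits_pieces_cut[OF P L])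
  have len: "length Cs = length Xs"
    and Cs_i: "\<And>i. i < length Xs \<Longrightarrow> Cs!i \<in> nc_fibre (std (blocks_in P (Xs!i)))"
    using Cs unfolding fibre_lists_def list_all2_conv_all_nth S_def[symmetric] Xs_def[symmetric] by auto
  have "\<exists>Q'. partition_on (Xs!i) Q' \<and> Cs!i = std Q' \<and> is_nc_closure Q' (blocks_in P (Xs!i))"
    if i: "i < length Xs" for i
    using Cs_i[OF i] mem_nc_fibre_std_iff[OF _ partition_on_blocks_in[OF decomp P fits i]]
      piece_subset[OF decomp i] finite_subset by blast
  then obtain Qf where Qf: "\<And>i. i < length Xs \<Longrightarrow>
      partition_on (Xs!i) (Qf i) \<and> Cs!i = std (Qf i) \<and> is_nc_closure (Qf i) (blocks_in P (Xs!i))"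
    by metis
  define Qs where "Qs = map Qf [0..<length Xs]"
  have Qs: "length Qs = length Xs" "\<And>i. i < length Xs \<Longrightarrow> partition_on (Xs!i) (Qs!i)"
    unfolding Qs_def using Qf by auto
  define P' where "P' = \<Union>(set Qs)"
  have P': "partition_on {1..n} P'" and fits': "fits_pieces Xs P'"
    and blocks_P': "\<And>i. i < length Xs \<Longrightarrow> blocks_in P' (Xs!i) = Qf i"
    unfolding P'_def using partition_on_glue[OF decomp Qs] fits_pieces_glue[OF decomp Qs]
      blocks_in_glue[OF decomp Qs] by (simp_all add: Qs_def)
  have "is_nc_closure P' P"
    using is_nc_closure_glue[OF decomp P' P nc fits' fits] Qf blocks_P' by simp
  moreover have "blocks_in P' S \<in> cuts P'" "\<Union>(blocks_in P' S) = S"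
    using blocks_in_cut[OF P' S] fits' unfolding Xs_def by auto
  moreover have "map (\<lambda>X. std (blocks_in P' X)) Xs = Cs"
    using len Qf blocks_P' by (intro nth_equalityI) auto
  ultimately show ?thesis
    using P' cut_eq_blocks_in[OF P L] unfolding split_cut_def S_def Xs_def by fastforce
qed

lemma bij_betw_split_cut:
  assumes nc: "noncrossing P"
  shows "bij_betw (split_cut n P) (Sigma (nc_fibre P) cuts) (Sigma (cuts P) (fibre_lists n P))"
  unfolding bij_betw_def
proof (intro conjI inj_onI subset_antisym subsetI)
  fix x y assume x: "x \<in> Sigma (nc_fibre P) cuts" and y: "y \<in> Sigma (nc_fibre P) cuts"
    and "split_cut n P x = split_cut n P y"
  moreover obtain P1 L1 P2 L2 where "x = (P1, L1)" "y = (P2, L2)" by fastforce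
  ultimately show "x = y" using split_cut_inj[of P1 L1 P2 L2] by (auto simp: mem_nc_fibre_iff)
next
  fix z assume "z \<in> split_cut n P ` Sigma (nc_fibre P) cuts"
  then show "z \<in> Sigma (cuts P) (fibre_lists n P)" using split_cut_mem by (auto simp: mem_nc_fibre_iff)
next
  fix z assume "z \<in> Sigma (cuts P) (fibre_lists n P)"
  then obtain L Cs where "z = (L, Cs)" "L \<in> cuts P" "Cs \<in> fibre_lists n P L" by blast
  then show "z \<in> split_cut n P ` Sigma (nc_fibre P) cuts"
    using split_cut_surj[OF nc] mem_nc_fibre_iff by (metis SigmaI image_eqI)
qed

end

section \<open>Linear maps between free modules\<close>

lemma lookup_scale [simp]: "Poly_Mapping.lookup (scale c x) k = c * Poly_Mapping.lookup x k"
  unfolding scale_def by (simp add: Poly_Mapping.map.rep_eq when_def)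

lemma scale_add: "scale c (x + y) = scale c x + scale c y"
  by (rule poly_mapping_eqI) (simp add: lookup_add algebra_simps)

lemma scale_add_left: "scale (a + b) x = scale a x + scale b x"
  by (rule poly_mapping_eqI) (simp add: lookup_add algebra_simps)

lemma scale_scale: "scale a (scale b x) = scale (a * b) x"
  by (rule poly_mapping_eqI) (simp add: algebra_simps)

lemma scale_one [simp]: "scale 1 x = x"
  by (rule poly_mapping_eqI) simp

lemma scale_zero [simp]: "scale 0 x = 0" "scale c 0 = 0"
  by (rule poly_mapping_eqI, simp)+

lemma scale_sum: "scale c (sum f A) = (\<Sum>i\<in>A. scale c (f i))"
  by (rule poly_mapping_eqI) (simp add: lookup_sum sum_distrib_left)

lemma scale_single: "scale c (Poly_Mapping.single k v) = Poly_Mapping.single k (c * v)"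
  by (rule poly_mapping_eqI) (simp add: lookup_single when_def)

lemma keys_scale: "Poly_Mapping.keys (scale c x) \<subseteq> Poly_Mapping.keys x"
  by (auto simp: in_keys_iff)

lemma keys_sum: "Poly_Mapping.keys (sum f A) \<subseteq> (\<Union>i\<in>A. Poly_Mapping.keys (f i))"
proof (induction A rule: infinite_finite_induct)
  case (insert a A)
  then show ?case using keys_add[of "f a" "sum f A"] by auto
qed simp_all

lemma lin_eq_sum:
  "finite K \<Longrightarrow> Poly_Mapping.keys x \<subseteq> K \<Longrightarrow> lin F x = (\<Sum>w\<in>K. scale (Poly_Mapping.lookup x w) (F w))"
  unfolding lin_def by (rule sum.mono_neutral_left) (auto simp: in_keys_iff)

lemma lin_add: "lin F (x + y) = lin F x + lin F y"
proof -
  let ?K = "Poly_Mapping.keys x \<union> Poly_Mapping.keys y"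
  have "lin F (x + y) = (\<Sum>w\<in>?K. scale (Poly_Mapping.lookup (x + y) w) (F w))"
    by (rule lin_eq_sum) (simp_all add: keys_add)
  also have "\<dots> = lin F x + lin F y"
    using lin_eq_sum[of ?K x F] lin_eq_sum[of ?K y F]
    by (simp add: lookup_add scale_add_left sum.distrib)
  finally show ?thesis .
qed

lemma lin_scale: "lin F (scale c x) = scale c (lin F x)"
proof -
  have "lin F (scale c x) = (\<Sum>w\<in>Poly_Mapping.keys x. scale (Poly_Mapping.lookup (scale c x) w) (F w))"
    by (rule lin_eq_sum) (simp_all add: keys_scale)
  then show ?thesis unfolding lin_def scale_sum by (simp add: scale_scale)
qed

lemma lin_single: "lin F (Poly_Mapping.single w c) = scale c (F w)"
  using lin_eq_sum[of "{w}" "Poly_Mapping.single w c" F] by simp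

lemma lin_mon [simp]: "lin F (mon w) = F w"
  unfolding mon_def lin_single by simp

lemma lin_add_fun: "lin (\<lambda>w. F w + G w) x = lin F x + lin G x"
  unfolding lin_def by (simp add: scale_add sum.distrib)

lemma lin_scale_fun: "lin (\<lambda>w. scale c (F w)) x = scale c (lin F x)"
  unfolding lin_def by (simp add: scale_scale scale_sum mult.commute)

lemma lin_cong: "(\<And>w. w \<in> Poly_Mapping.keys x \<Longrightarrow> F w = G w) \<Longrightarrow> lin F x = lin G x"
  unfolding lin_def by simp

lemma lin_mon_id: "lin mon x = x"
proof (rule poly_mapping_eqI)
  fix k
  have "Poly_Mapping.lookup (lin mon x) k =
      (\<Sum>w\<in>Poly_Mapping.keys x. Poly_Mapping.lookup x w * (1 when w = k))"
    unfolding lin_def by (simp add: lookup_sum mon_def lookup_single)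
  also have "\<dots> = (\<Sum>w\<in>Poly_Mapping.keys x. if w = k then Poly_Mapping.lookup x w else 0)"
    by (rule sum.cong) (simp_all add: when_def)
  finally show "Poly_Mapping.lookup (lin mon x) k = Poly_Mapping.lookup x k"
    by (simp add: sum.delta in_keys_iff)
qed

definition lin_map :: "(('a \<Rightarrow>\<^sub>0 'k::comm_ring_1) \<Rightarrow> ('b \<Rightarrow>\<^sub>0 'k)) \<Rightarrow> bool" where
  "lin_map f \<longleftrightarrow> (\<forall>a b. f (a + b) = f a + f b) \<and> (\<forall>c a. f (scale c a) = scale c (f a))"

lemma lin_mapI:
  "(\<And>a b. f (a + b) = f a + f b) \<Longrightarrow> (\<And>c a. f (scale c a) = scale c (f a)) \<Longrightarrow> lin_map f"
  unfolding lin_map_def by blast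

lemma lin_map_add: "lin_map f \<Longrightarrow> f (a + b) = f a + f b"
  unfolding lin_map_def by blast

lemma lin_map_scale: "lin_map f \<Longrightarrow> f (scale c a) = scale c (f a)"
  unfolding lin_map_def by blast

lemma lin_map_sum:
  assumes f: "lin_map f"
  shows "f (sum g A) = (\<Sum>i\<in>A. f (g i))"
proof -
  have zero: "f 0 = 0" using lin_map_scale[OF f, of 0 0] by simp
  show ?thesis by (induction A rule: infinite_finite_induct) (simp_all add: zero lin_map_add[OF f])
qed

lemma lin_map_lin: "lin_map (lin F)"
  by (rule lin_mapI) (simp_all add: lin_add lin_scale)

lemma lin_map_comp: "lin_map f \<Longrightarrow> lin_map g \<Longrightarrow> lin_map (\<lambda>x. f (g x))"
  unfolding lin_map_def by simp

lemma lin_map_eq_lin: "lin_map f \<Longrightarrow> f x = lin (\<lambda>w. f (mon w)) x"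
  using lin_map_sum[of f "\<lambda>w. scale (Poly_Mapping.lookup x w) (mon w)" "Poly_Mapping.keys x"]
    lin_map_scale[of f] lin_mon_id[of x] unfolding lin_def by simp

lemma lin_map_ext_on:
  "lin_map f \<Longrightarrow> lin_map g \<Longrightarrow> (\<And>w. w \<in> Poly_Mapping.keys x \<Longrightarrow> f (mon w) = g (mon w)) \<Longrightarrow> f x = g x"
  using lin_map_eq_lin lin_cong by metis

lemma lin_map_ext: "lin_map f \<Longrightarrow> lin_map g \<Longrightarrow> (\<And>w. f (mon w) = g (mon w)) \<Longrightarrow> f x = g x"
  using lin_map_ext_on by blast

lemma bilinear_ext:
  assumes "\<And>y. lin_map (\<lambda>x. F x y)" "\<And>x. lin_map (\<lambda>y. F x y)"
    and "\<And>y. lin_map (\<lambda>x. G x y)" "\<And>x. lin_map (\<lambda>y. G x y)"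
    and "\<And>u v. F (mon u) (mon v) = G (mon u) (mon v)"
  shows "F x y = G x y"
  by (rule lin_map_ext[where f = "\<lambda>x. F x y", OF assms(1,3)], rule lin_map_ext[OF assms(2,4,5)])

definition bil :: "('a \<Rightarrow> 'b \<Rightarrow> ('c \<Rightarrow>\<^sub>0 'k::comm_ring_1)) \<Rightarrow> ('a \<Rightarrow>\<^sub>0 'k) \<Rightarrow> ('b \<Rightarrow>\<^sub>0 'k) \<Rightarrow> ('c \<Rightarrow>\<^sub>0 'k)" where
  "bil H x y = lin (\<lambda>u. lin (\<lambda>v. H u v) y) x"

lemma bil_mon [simp]: "bil H (mon u) (mon v) = H u v"
  unfolding bil_def by simp

lemma lin_map_bil1: "lin_map (\<lambda>x. bil H x y)"
  unfolding bil_def by (rule lin_map_lin)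

lemma lin_map_bil2: "lin_map (\<lambda>y. bil H x y)"
  unfolding bil_def by (rule lin_mapI) (simp_all add: lin_add lin_scale lin_add_fun lin_scale_fun)

lemma bil_eq_sum: "bil H x y = (\<Sum>u\<in>Poly_Mapping.keys x. \<Sum>v\<in>Poly_Mapping.keys y.
    scale (Poly_Mapping.lookup x u * Poly_Mapping.lookup y v) (H u v))"
  unfolding bil_def lin_def by (simp add: scale_sum scale_scale)

lemma bil_assoc:
  assumes "\<And>u v. H u v = mon (m u v)" "\<And>u v w. m (m u v) w = m u (m v w)"
  shows "bil H (bil H x y) z = bil H x (bil H y z)"
proof (rule lin_map_ext[where f = "\<lambda>z. bil H (bil H x y) z"])
  fix w
  show "bil H (bil H x y) (mon w) = bil H x (bil H y (mon w))"
    by (rule bilinear_ext[where F = "\<lambda>x y. bil H (bil H x y) (mon w)"])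
      (simp_all add: assms lin_map_bil1 lin_map_bil2 lin_map_comp[OF lin_map_bil1]
        lin_map_comp[OF lin_map_bil2])
qed (simp_all add: lin_map_bil2 lin_map_comp[OF lin_map_bil2])

lemma bil_unit:
  assumes "\<And>v. H e v = mon v" "\<And>u. H u e = mon u"
  shows "bil H (mon e) x = x" "bil H x (mon e) = x"
  by (rule lin_map_ext[OF _ lin_mapI]; simp add: assms lin_map_bil1 lin_map_bil2)+

lemma bil_hom:
  assumes f: "lin_map f" and "\<And>u v. f (H u v) = bil H' (f (mon u)) (f (mon v))"
  shows "f (bil H x y) = bil H' (f x) (f y)"
  by (rule bilinear_ext[where F = "\<lambda>x y. f (bil H x y)"])
    (simp_all add: assms lin_map_comp[OF f] lin_map_bil1 lin_map_bil2
      lin_map_comp[OF lin_map_bil1 f] lin_map_comp[OF lin_map_bil2 f])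

lemma wmult_eq_bil: "wmult x y = bil (\<lambda>u v. mon (u @ v)) x y"
  unfolding wmult_def bil_eq_sum by (simp add: mon_def scale_single)

lemma tmult_eq_bil: "tmult x y = bil (\<lambda>u v. mon (fst u @ fst v, snd u @ snd v)) x y"
  unfolding tmult_def bil_eq_sum by (simp add: mon_def scale_single)

lemma tensor_eq_bil: "tensor x y = bil (\<lambda>u v. mon (u, v)) x y"
  unfolding tensor_def bil_eq_sum by (simp add: mon_def scale_single)

lemma lin_map_wmult: "lin_map (\<lambda>x. wmult x y)" "lin_map (\<lambda>y. wmult x y)"
  unfolding wmult_eq_bil by (rule lin_map_bil1 lin_map_bil2)+

lemma lin_map_tmult: "lin_map (\<lambda>x. tmult x y)" "lin_map (\<lambda>y. tmult x y)"
  unfolding tmult_eq_bil by (rule lin_map_bil1 lin_map_bil2)+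

lemma lin_map_tensor: "lin_map (\<lambda>x. tensor x y)" "lin_map (\<lambda>y. tensor x y)"
  unfolding tensor_eq_bil by (rule lin_map_bil1 lin_map_bil2)+

lemma wmult_mon: "wmult (mon u) (mon v) = mon (u @ v)"
  unfolding wmult_eq_bil by simp

lemma tmult_mon: "tmult (mon u) (mon v) = mon (fst u @ fst v, snd u @ snd v)"
  unfolding tmult_eq_bil by simp

lemma tensor_mon: "tensor (mon u) (mon v) = mon (u, v)"
  unfolding tensor_eq_bil by simp

lemma wmult_assoc: "wmult (wmult x y) z = wmult x (wmult y z)"
  unfolding wmult_eq_bil by (rule bil_assoc[where m = "(@)"]) simp_all

lemma tmult_assoc: "tmult (tmult x y) z = tmult x (tmult y z)"
  unfolding tmult_eq_bil by (rule bil_assoc[where m = "\<lambda>u v. (fst u @ fst v, snd u @ snd v)"]) simp_all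

lemma wmult_unit: "wmult (mon []) x = x" "wmult x (mon []) = x"
  unfolding wmult_eq_bil by (rule bil_unit; simp)+

lemma tmult_unit: "tmult (mon ([], [])) x = x" "tmult x (mon ([], [])) = x"
  unfolding tmult_eq_bil by (rule bil_unit; simp)+

lemma wprod_simps [simp]: "wprod [] = mon []" "wprod (a # xs) = wmult a (wprod xs)"
  unfolding wprod_def by simp_all

lemma tprod_simps [simp]: "tprod [] = mon ([], [])" "tprod (a # xs) = tmult a (tprod xs)"
  unfolding tprod_def by simp_all

lemma wprod_append: "wprod (xs @ ys) = wmult (wprod xs) (wprod ys)"
  by (induction xs) (simp_all add: wmult_unit wmult_assoc)

lemma tprod_append: "tprod (xs @ ys) = tmult (tprod xs) (tprod ys)"
  by (induction xs) (simp_all add: tmult_unit tmult_assoc)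

lemma wmult_sum: "wmult (\<Sum>a\<in>A. f a) (\<Sum>b\<in>B. g b) = (\<Sum>a\<in>A. \<Sum>b\<in>B. wmult (f a) (g b))"
  by (simp add: lin_map_sum[OF lin_map_wmult(1)] lin_map_sum[OF lin_map_wmult(2)] sum.swap[of _ B])

lemma tensor_sum: "tensor (\<Sum>a\<in>A. f a) (\<Sum>b\<in>B. g b) = (\<Sum>a\<in>A. \<Sum>b\<in>B. tensor (f a) (g b))"
  by (simp add: lin_map_sum[OF lin_map_tensor(1)] lin_map_sum[OF lin_map_tensor(2)] sum.swap[of _ B])

lemma tmult_tensor: "tmult (tensor a b) (tensor c d) = tensor (wmult a c) (wmult b d)"
proof (rule bilinear_ext[where F = "\<lambda>a c. tmult (tensor a b) (tensor c d)"])
  fix u1 u2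
  show "tmult (tensor (mon u1) b) (tensor (mon u2) d) = tensor (wmult (mon u1) (mon u2)) (wmult b d)"
    by (rule bilinear_ext[where F = "\<lambda>b d. tmult (tensor (mon u1) b) (tensor (mon u2) d)"])
      (simp_all add: tensor_mon tmult_mon wmult_mon lin_map_tensor lin_map_wmult
        lin_map_comp[OF lin_map_tmult(1)] lin_map_comp[OF lin_map_tmult(2)]
        lin_map_comp[OF lin_map_tensor(2)])
qed (simp_all add: lin_map_tensor lin_map_wmult lin_map_comp[OF lin_map_tmult(1)]
    lin_map_comp[OF lin_map_tmult(2)] lin_map_comp[OF lin_map_tensor(1)])

lemma lin_map_tmap: "lin_map (tmap f)"
  unfolding tmap_def by (rule lin_map_lin)

lemma tmap_mon: "tmap f (mon (u, v)) = tensor (f (mon u)) (f (mon v))"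
  unfolding tmap_def by simp

lemma tmap_tmult:
  assumes "\<And>x y. f (wmult x y) = wmult (f x) (f y)"
  shows "tmap f (tmult a b) = tmult (tmap f a) (tmap f b)"
  unfolding tmult_eq_bil
  by (rule bil_hom[OF lin_map_tmap])
    (auto simp: tmult_eq_bil[symmetric] tmap_mon tmult_tensor wmult_mon[symmetric] assms)

lemma lin_map_ncstar: "lin_map ncstar"
  unfolding ncstar_def by (rule lin_map_lin)

lemma ncstar_mon: "ncstar (mon w) = wprod (map ncstar_gen w)"
  unfolding ncstar_def by simp

lemma ncstar_wmult: "ncstar (wmult x y) = wmult (ncstar x) (ncstar y)"
  unfolding wmult_eq_bil
  by (rule bil_hom[OF lin_map_ncstar]) (simp add: ncstar_mon wprod_append wmult_eq_bil[symmetric])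

lemma lin_map_cop0: "lin_map cop0"
  unfolding cop0_def by (rule lin_map_lin)

lemma cop0_mon: "cop0 (mon w) = tprod (map cop0_gen w)"
  unfolding cop0_def by simp

lemma cop0_wmult: "cop0 (wmult x y) = tmult (cop0 x) (cop0 y)"
  unfolding wmult_eq_bil tmult_eq_bil
  by (rule bil_hom[OF lin_map_cop0]) (simp add: cop0_mon tprod_append tmult_eq_bil[symmetric])

lemma lin_map_cop: "lin_map cop"
  unfolding cop_def by (rule lin_map_lin)

lemma cop_mon: "cop (mon w) = tprod (map cop_gen w)"
  unfolding cop_def by simp

lemma lin_map_quot: "lin_map quot"
  unfolding quot_def by (rule lin_map_lin)

lemma quot_mon: "quot (mon w) = mon (filter (\<lambda>P. P \<noteq> {}) w)"
  unfolding quot_def by simp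

lemma quot_wmult: "quot (wmult x y) = wmult (quot x) (quot y)"
  unfolding wmult_eq_bil by (rule bil_hom[OF lin_map_quot]) (simp add: quot_mon)

definition quot2 :: "'k::comm_ring_1 alg2 \<Rightarrow> 'k alg2" where
  "quot2 z = lin (\<lambda>(u, v). mon (filter (\<lambda>P. P \<noteq> {}) u, filter (\<lambda>P. P \<noteq> {}) v)) z"

lemma lin_map_quot2: "lin_map quot2"
  unfolding quot2_def by (rule lin_map_lin)

lemma quot2_mon: "quot2 (mon (u, v)) = mon (filter (\<lambda>P. P \<noteq> {}) u, filter (\<lambda>P. P \<noteq> {}) v)"
  unfolding quot2_def by simp

lemma quot2_tmult: "quot2 (tmult x y) = tmult (quot2 x) (quot2 y)"
  unfolding tmult_eq_bil by (rule bil_hom[OF lin_map_quot2]) (auto simp: quot2_mon)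

lemma quot2_tensor: "quot2 (tensor a b) = tensor (quot a) (quot b)"
  by (rule bilinear_ext[where F = "\<lambda>a b. quot2 (tensor a b)"])
    (simp_all add: tensor_mon quot2_mon quot_mon lin_map_tensor lin_map_comp[OF lin_map_quot2]
      lin_map_comp[OF lin_map_tensor(1) lin_map_quot] lin_map_comp[OF lin_map_tensor(2) lin_map_quot])

lemma ncstar_gen_eq: "ncstar_gen P = (\<Sum>P'\<in>nc_fibre P. mon [P'])"
  unfolding ncstar_gen_def nc_fibre_def ..

definition fibre_words :: "setpart list \<Rightarrow> setpart list set" where
  "fibre_words Us = {Bs. list_all2 (\<lambda>B U. B \<in> nc_fibre U) Bs Us}"

lemma fibre_words_Nil: "fibre_words [] = {[]}"
  unfolding fibre_words_def by auto

lemma fibre_words_Cons: "fibre_words (U # Us) = (\<lambda>(B, Bs). B # Bs) ` (nc_fibre U \<times> fibre_words Us)"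
  unfolding fibre_words_def by (auto simp: list_all2_Cons2)

lemma finite_fibre_words: "finite (fibre_words Us)"
  by (induction Us) (simp_all add: fibre_words_Nil fibre_words_Cons finite_nc_fibre)

lemma inj_on_Cons_pair: "inj_on (\<lambda>(B, Bs). B # Bs) X"
  by (rule inj_onI) auto

lemma sum_Cons_pair:
  "(\<Sum>B\<in>A. \<Sum>Bs\<in>As. f (B # Bs)) = (\<Sum>Cs\<in>(\<lambda>(B, Bs). B # Bs) ` (A \<times> As). f Cs)"
proof -
  have "(\<Sum>B\<in>A. \<Sum>Bs\<in>As. f (B # Bs)) = (\<Sum>z\<in>A \<times> As. f ((\<lambda>(B, Bs). B # Bs) z))"
    by (simp add: sum.cartesian_product prod.case_distrib)
  also have "\<dots> = (\<Sum>Cs\<in>(\<lambda>(B, Bs). B # Bs) ` (A \<times> As). f Cs)"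
    by (rule sum.reindex[OF inj_on_Cons_pair, symmetric, unfolded comp_def])
  finally show ?thesis .
qed

lemma wprod_ncstar_gen: "wprod (map ncstar_gen Us) = (\<Sum>Bs\<in>fibre_words Us. mon Bs :: 'k::comm_ring_1 alg)"
proof (induction Us)
  case (Cons U Us)
  have "wprod (map ncstar_gen (U # Us)) = wmult (\<Sum>B\<in>nc_fibre U. mon [B]) (\<Sum>Bs\<in>fibre_words Us. mon Bs :: 'k alg)"
    by (simp add: Cons.IH ncstar_gen_eq)
  also have "\<dots> = (\<Sum>B\<in>nc_fibre U. \<Sum>Bs\<in>fibre_words Us. mon (B # Bs))"
    by (simp add: wmult_sum wmult_mon)
  finally show ?case by (simp add: sum_Cons_pair fibre_words_Cons)
qed (simp add: fibre_words_Nil)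

definition head_tail :: "setpart list \<Rightarrow> 'k::comm_ring_1 alg2" where
  "head_tail Cs = mon ([hd Cs], tl Cs)"

context
  fixes n :: nat and P :: setpart
  assumes P: "partition_on {1..n} P"
begin

lemma cop0_term_eq_head_tail:
  assumes P': "partition_on {1..n} P'" and L': "L' \<in> cuts P'"
  shows "Poly_Mapping.single ([std L'], upper_parts P' L') 1 = head_tail (snd (split_cut n P (P', L')))"
  using upper_parts_eq[OF P' L'] cut_eq_blocks_in[OF P' L']
  unfolding split_cut_def head_tail_def mon_def pieces_def by simp

lemma fibre_lists_eq:
  assumes L: "L \<in> cuts P"
  shows "fibre_lists n P L = (\<lambda>(B, Bs). B # Bs) ` (nc_fibre (std L) \<times> fibre_words (upper_parts P L))"
  using cut_eq_blocks_in[OF P L]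
  unfolding fibre_lists_def fibre_words_def upper_parts_eq[OF P L] list_all2_map2 pieces_def
  by (auto simp: list_all2_Cons2)

lemma tmap_ncstar_cop0_term:
  assumes L: "L \<in> cuts P"
  shows "tmap ncstar (Poly_Mapping.single ([std L], upper_parts P L) 1) =
    (\<Sum>Cs\<in>fibre_lists n P L. head_tail Cs :: 'k::comm_ring_1 alg2)"
proof -
  have "tmap ncstar (Poly_Mapping.single ([std L], upper_parts P L) 1 :: 'k alg2) =
      tensor (ncstar_gen (std L)) (wprod (map ncstar_gen (upper_parts P L)))"
    by (simp add: mon_def[symmetric] tmap_mon ncstar_mon wmult_unit)
  also have "\<dots> = (\<Sum>B\<in>nc_fibre (std L). \<Sum>Bs\<in>fibre_words (upper_parts P L). mon ([B], Bs))"
    unfolding ncstar_gen_eq wprod_ncstar_gen tensor_sum by (simp add: tensor_mon)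
  also have "\<dots> = (\<Sum>Cs\<in>fibre_lists n P L. head_tail Cs)"
    unfolding fibre_lists_eq[OF L] sum_Cons_pair[symmetric] head_tail_def by simp
  finally show ?thesis .
qed


lemma cop0_ncstar_gen:
  assumes nc: "noncrossing P"
  shows "cop0 (ncstar_gen P :: 'k::comm_ring_1 alg) = tmap ncstar (cop0_gen P)"
proof -
  have fibre: "P' \<in> nc_fibre P \<Longrightarrow> partition_on {1..n} P'" for P'
    using mem_nc_fibre_iff[OF P] by blast
  have finite_cuts_fibre: "P' \<in> nc_fibre P \<Longrightarrow> finite (cuts P')" for P'
    using finite_cuts fibre by blast
  have "cop0 (ncstar_gen P :: 'k alg) = (\<Sum>P'\<in>nc_fibre P. \<Sum>L'\<in>cuts P'.
      Poly_Mapping.single ([std L'], upper_parts P' L') 1)"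
    unfolding ncstar_gen_eq lin_map_sum[OF lin_map_cop0] by (simp add: cop0_mon tmult_unit cop0_gen_def)
  also have "\<dots> = (\<Sum>P'\<in>nc_fibre P. \<Sum>L'\<in>cuts P'. head_tail (snd (split_cut n P (P', L'))))"
    by (intro sum.cong refl) (rule cop0_term_eq_head_tail[OF fibre])
  also have "\<dots> = (\<Sum>z\<in>Sigma (nc_fibre P) cuts. head_tail (snd (split_cut n P z)))"
    by (subst sum.Sigma) (simp_all add: finite_nc_fibre finite_cuts_fibre split_def)
  also have "\<dots> = (\<Sum>z\<in>Sigma (cuts P) (fibre_lists n P). head_tail (snd z))"
    by (rule sum.reindex_bij_betw[OF bij_betw_split_cut[OF P nc], where g = "\<lambda>z. head_tail (snd z)"])
  also have "\<dots> = (\<Sum>L\<in>cuts P. \<Sum>Cs\<in>fibre_lists n P L. head_tail Cs)"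
    by (subst sum.Sigma)
      (simp_all add: finite_cuts[OF P] fibre_lists_eq finite_nc_fibre finite_fibre_words split_def)
  also have "\<dots> = (\<Sum>L\<in>cuts P. tmap ncstar (Poly_Mapping.single ([std L], upper_parts P L) 1))"
    by (intro sum.cong refl) (simp add: tmap_ncstar_cop0_term)
  also have "\<dots> = tmap ncstar (cop0_gen P)"
    unfolding cop0_gen_def lin_map_sum[OF lin_map_tmap] ..
  finally show ?thesis .
qed

end

lemma cop0_ncstar_mon:
  assumes "\<And>P. P \<in> set w \<Longrightarrow> is_part P \<and> noncrossing P"
  shows "cop0 (ncstar (mon w :: 'k::comm_ring_1 alg)) = tmap ncstar (cop0 (mon w))"
  using assms
proof (induction w)
  case Nil
  then show ?case by (simp add: ncstar_mon cop0_mon tmap_mon tensor_mon)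
next
  case (Cons P w)
  obtain n where "partition_on {1..n} P" "noncrossing P"
    using Cons.prems[of P] unfolding is_part_def is_part_of_def by auto
  then have "cop0 (ncstar_gen P :: 'k alg) = tmap ncstar (cop0_gen P)" by (rule cop0_ncstar_gen)
  moreover have "cop0 (wprod (map ncstar_gen w) :: 'k alg) = tmap ncstar (tprod (map cop0_gen w))"
    using Cons by (simp add: ncstar_mon cop0_mon)
  ultimately show ?case
    by (simp add: ncstar_mon cop0_mon cop0_wmult tmap_tmult[OF ncstar_wmult])
qed

lemma cop0_ncstar:
  assumes x: "x \<in> Bnc"
  shows "cop0 (ncstar x) = tmap ncstar (cop0 x)"
proof (rule lin_map_ext_on[where f = "\<lambda>x. cop0 (ncstar x)"])
  show "lin_map (\<lambda>x. cop0 (ncstar x))" by (rule lin_map_comp[OF lin_map_cop0 lin_map_ncstar])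
  show "lin_map (\<lambda>x. tmap ncstar (cop0 x))" by (rule lin_map_comp[OF lin_map_tmap lin_map_cop0])
  fix w assume "w \<in> Poly_Mapping.keys x"
  then show "cop0 (ncstar (mon w)) = tmap ncstar (cop0 (mon w))"
    using x unfolding Bnc_def by (intro cop0_ncstar_mon) auto
qed

definition all_letters :: "(setpart \<Rightarrow> bool) \<Rightarrow> 'k::comm_ring_1 alg \<Rightarrow> bool" where
  "all_letters Q x \<longleftrightarrow> (\<forall>w\<in>Poly_Mapping.keys x. \<forall>P\<in>set w. Q P)"

lemma all_letters_sum: "(\<And>i. i \<in> A \<Longrightarrow> all_letters Q (f i)) \<Longrightarrow> all_letters Q (sum f A)"
  unfolding all_letters_def using keys_sum by fastforce

lemma all_letters_scale: "all_letters Q x \<Longrightarrow> all_letters Q (scale c x)"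
  unfolding all_letters_def using keys_scale by fastforce

lemma all_letters_lin:
  "(\<And>w. w \<in> Poly_Mapping.keys x \<Longrightarrow> all_letters Q (F w)) \<Longrightarrow> all_letters Q (lin F x)"
  unfolding lin_def by (rule all_letters_sum) (rule all_letters_scale, blast)

lemma all_letters_mon: "(\<And>P. P \<in> set w \<Longrightarrow> Q P) \<Longrightarrow> all_letters Q (mon w :: 'k::comm_ring_1 alg)"
  unfolding all_letters_def mon_def by simp

lemma all_letters_wmult: "all_letters Q a \<Longrightarrow> all_letters Q b \<Longrightarrow> all_letters Q (wmult a b)"
  unfolding wmult_def by (intro all_letters_sum) (auto simp: all_letters_def keys_single)

lemma all_letters_wprod: "(\<And>a. a \<in> set xs \<Longrightarrow> all_letters Q a) \<Longrightarrow> all_letters Q (wprod xs)"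
  by (induction xs) (auto intro!: all_letters_wmult all_letters_mon)

lemma all_letters_ncstar:
  assumes "\<And>w P P'. w \<in> Poly_Mapping.keys x \<Longrightarrow> P \<in> set w \<Longrightarrow> P' \<in> nc_fibre P \<Longrightarrow> Q P'"
  shows "all_letters Q (ncstar x)"
  unfolding ncstar_def
proof (intro all_letters_lin all_letters_wprod)
  fix w a assume "w \<in> Poly_Mapping.keys x" "a \<in> set (map ncstar_gen w)"
  then show "all_letters Q a"
    unfolding ncstar_gen_eq using assms by (auto intro!: all_letters_sum all_letters_mon)
qed

lemma ncstar_in_Bset: "ncstar x \<in> Bset"
  unfolding Bset_def all_letters_def[symmetric] using is_part_nc_fibre all_letters_ncstar by blast

lemma ncstar_in_Hset:
  assumes "x \<in> Hnc"
  shows "ncstar x \<in> Hset"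
  unfolding Hset_def all_letters_def[symmetric] mem_Collect_eq
  using assms is_part_nc_fibre nc_fibre_nonempty unfolding Hnc_def
  by (intro all_letters_ncstar) blast

definition lin_form :: "(setpart list \<Rightarrow> 'k) \<Rightarrow> 'k::comm_ring_1 alg \<Rightarrow> 'k" where
  "lin_form e x = (\<Sum>w\<in>Poly_Mapping.keys x. Poly_Mapping.lookup x w * e w)"

lemma lin_form_eq_sum:
  "finite K \<Longrightarrow> Poly_Mapping.keys x \<subseteq> K \<Longrightarrow> lin_form e x = (\<Sum>w\<in>K. Poly_Mapping.lookup x w * e w)"
  unfolding lin_form_def by (rule sum.mono_neutral_left) (auto simp: in_keys_iff)

lemma lin_form_add: "lin_form e (x + y) = lin_form e x + lin_form e y"
proof -
  let ?K = "Poly_Mapping.keys x \<union> Poly_Mapping.keys y"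
  have "lin_form e (x + y) = (\<Sum>w\<in>?K. Poly_Mapping.lookup (x + y) w * e w)"
    by (rule lin_form_eq_sum) (simp_all add: keys_add)
  also have "\<dots> = lin_form e x + lin_form e y"
    using lin_form_eq_sum[of ?K x e] lin_form_eq_sum[of ?K y e]
    by (simp add: lookup_add algebra_simps sum.distrib)
  finally show ?thesis .
qed

lemma lin_form_scale: "lin_form e (scale c x) = c * lin_form e x"
proof -
  have "lin_form e (scale c x) = (\<Sum>w\<in>Poly_Mapping.keys x. Poly_Mapping.lookup (scale c x) w * e w)"
    by (rule lin_form_eq_sum) (simp_all add: keys_scale)
  then show ?thesis unfolding lin_form_def by (simp add: sum_distrib_left algebra_simps)
qed

lemma lin_form_sum: "lin_form e (sum f A) = (\<Sum>i\<in>A. lin_form e (f i))"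
proof (induction A rule: infinite_finite_induct)
  case (insert a A)
  then show ?case by (simp add: lin_form_add)
qed (simp_all add: lin_form_def)

lemma lin_form_single: "lin_form e (Poly_Mapping.single w c) = c * e w"
  using lin_form_eq_sum[of "{w}" "Poly_Mapping.single w c" e] by simp

lemma lin_form_mon: "lin_form e (mon w) = e w"
  unfolding mon_def lin_form_single by simp

lemma lin_form_wmult:
  assumes "\<And>u v. e (u @ v) = e u * e v"
  shows "lin_form e (wmult a b) = lin_form e a * lin_form e b"
proof -
  have "lin_form e (wmult a b) = (\<Sum>u\<in>Poly_Mapping.keys a. \<Sum>v\<in>Poly_Mapping.keys b.
      Poly_Mapping.lookup a u * Poly_Mapping.lookup b v * e (u @ v))"
    unfolding wmult_def by (simp add: lin_form_sum lin_form_single)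
  also have "\<dots> = lin_form e a * lin_form e b"
    unfolding lin_form_def by (simp add: assms sum_product algebra_simps)
  finally show ?thesis .
qed

lemma lin_form_ncstar:
  assumes hom: "\<And>u v. e (u @ v) = e u * e v" and "e [] = 1"
    and gen: "\<And>P. lin_form e (ncstar_gen P) = e [P]"
  shows "lin_form e (ncstar x) = lin_form e x"
proof -
  have "lin_form e (wprod (map ncstar_gen w)) = e w" for w :: "setpart list"
  proof (induction w)
    case (Cons P w)
    then show ?case using hom[of "[P]" w] by (simp add: lin_form_wmult[OF hom] gen)
  qed (simp add: lin_form_mon \<open>e [] = 1\<close>)
  then show ?thesis unfolding ncstar_def lin_def lin_form_sum lin_form_scale by (simp add: lin_form_def)
qed

lemma counit0_ncstar: "counit0 (ncstar x) = counit0 x"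
proof -
  have gen: "lin_form (\<lambda>w. if \<forall>P\<in>set w. P = {} then 1 else 0) (ncstar_gen P) = (if P = {} then 1 else 0)"
    for P :: setpart
  proof (cases "P = {}")
    case False
    then show ?thesis
      unfolding ncstar_gen_eq lin_form_sum lin_form_mon using nc_fibre_nonempty by simp
  qed (simp add: ncstar_gen_eq nc_fibre_empty lin_form_mon)
  show ?thesis unfolding counit0_def lin_form_def[symmetric] by (rule lin_form_ncstar) (auto simp: gen)
qed

lemma counit_ncstar: "counit (ncstar x) = counit x"
  unfolding counit_def lin_form_def[symmetric]
  by (rule lin_form_ncstar) (simp_all add: ncstar_gen_eq lin_form_sum lin_form_mon)

section \<open>Passing to the connected quotient\<close>

lemma quot_ncstar_gen: "quot (ncstar_gen P) = (if P = {} then mon [] else ncstar_gen P)"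
proof (cases "P = {}")
  case False
  have "quot (ncstar_gen P) = (\<Sum>P'\<in>nc_fibre P. quot (mon [P']))"
    unfolding ncstar_gen_eq by (rule lin_map_sum[OF lin_map_quot])
  also have "\<dots> = ncstar_gen P"
    unfolding ncstar_gen_eq using nc_fibre_nonempty[OF False] by (intro sum.cong) (auto simp: quot_mon)
  finally show ?thesis using False by simp
qed (simp add: ncstar_gen_eq nc_fibre_empty quot_mon)

lemma quot_ncstar: "quot (ncstar x) = ncstar (quot x)"
proof (rule lin_map_ext[where f = "\<lambda>x. quot (ncstar x)"])
  show "lin_map (\<lambda>x. quot (ncstar x))" by (rule lin_map_comp[OF lin_map_quot lin_map_ncstar])
  show "lin_map (\<lambda>x. ncstar (quot x))" by (rule lin_map_comp[OF lin_map_ncstar lin_map_quot])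
  fix w :: "setpart list"
  show "quot (ncstar (mon w)) = ncstar (quot (mon w :: 'a alg))"
    unfolding ncstar_mon quot_mon
    by (induction w) (simp_all add: quot_mon quot_wmult quot_ncstar_gen wmult_unit)
qed

lemma cop_eq_quot2: "cop x = quot2 (cop0 x)"
proof (rule lin_map_ext[OF lin_map_cop lin_map_comp[OF lin_map_quot2 lin_map_cop0]])
  have gen: "cop_gen P = quot2 (cop0_gen P)" for P :: setpart
    unfolding cop_gen_def cop0_gen_def lin_map_sum[OF lin_map_quot2] by (simp add: mon_def[symmetric] quot2_mon)
  show "cop (mon w :: 'a alg) = quot2 (cop0 (mon w))" for w
    unfolding cop_mon cop0_mon by (induction w) (simp_all add: quot2_mon quot2_tmult gen)
qed

lemma quot2_tmap_ncstar: "quot2 (tmap ncstar z) = tmap ncstar (quot2 z)"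
proof (rule lin_map_ext[where f = "\<lambda>z. quot2 (tmap ncstar z)"])
  show "lin_map (\<lambda>z. quot2 (tmap ncstar z))" by (rule lin_map_comp[OF lin_map_quot2 lin_map_tmap])
  show "lin_map (\<lambda>z. tmap ncstar (quot2 z))" by (rule lin_map_comp[OF lin_map_tmap lin_map_quot2])
  fix w :: "setpart list \<times> setpart list"
  show "quot2 (tmap ncstar (mon w)) = tmap ncstar (quot2 (mon w :: 'a alg2))"
    by (cases w) (simp add: tmap_mon quot2_mon quot2_tensor quot_ncstar quot_mon)
qed

lemma cop_ncstar:
  assumes "x \<in> Hnc"
  shows "cop (ncstar x) = tmap ncstar (cop x)"
proof -
  have "x \<in> Bnc" using assms unfolding Hnc_def Bnc_def by blast
  then show ?thesis by (simp add: cop_eq_quot2 cop0_ncstar quot2_tmap_ncstar)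
qed

lemma bialg_homI:
  assumes "lin_map f" "\<And>x. x \<in> A \<Longrightarrow> f x \<in> B" "f eA = eB" "\<And>x y. f (mA x y) = mB (f x) (f y)"
    "\<And>x. x \<in> A \<Longrightarrow> cB (f x) = tmap f (cA x)" "\<And>x. uB (f x) = uA x"
  shows "bialg_hom A mA eA cA uA B mB eB cB uB f"
  unfolding bialg_hom_def using assms lin_map_add lin_map_scale by blast

theorem mainTheorem3:
  shows "bialg_hom (Bnc :: 'k::field alg set) wmult (mon []) cop0 counit0
                   Bset wmult (mon []) cop0 counit0 ncstar
       \<and> (\<forall>x \<in> (Bnc :: 'k alg set). quot (ncstar x) = ncstar (quot x))
       \<and> bialg_hom (Hnc :: 'k alg set) wmult (mon []) cop counit
                   Hset wmult (mon []) cop counit ncstar"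
proof -
  have unit: "ncstar (mon []) = (mon [] :: 'k alg)" by (simp add: ncstar_mon)
  have "bialg_hom (Bnc :: 'k alg set) wmult (mon []) cop0 counit0 Bset wmult (mon []) cop0 counit0 ncstar"
    by (rule bialg_homI) (simp_all add: lin_map_ncstar ncstar_in_Bset unit ncstar_wmult cop0_ncstar counit0_ncstar)
  moreover have "bialg_hom (Hnc :: 'k alg set) wmult (mon []) cop counit Hset wmult (mon []) cop counit ncstar"
    by (rule bialg_homI) (simp_all add: lin_map_ncstar ncstar_in_Hset unit ncstar_wmult cop_ncstar counit_ncstar)
  ultimately show ?thesis using quot_ncstar by blast
qed

end
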